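(* Let $\pi:(Z,U)\to(Y,S)$ be a factor map of topological dynamical systems and $f\in C(Z)$. Then the map $\psi_f:\mathcal{M}_S(Y)\to\mathbb{R}$ is lower semi-continuous (with respect to the weak* topology) and convex.
   Context: A topological dynamical system is a pair $(X,T)$ with $X$ compact metrizable and $T$ a homeomorphism; $\mathcal{M}_T(X)$ is the set of $T$-invariant Borel probability measures with the weak* topology. A factor map is a continuous surjection $\pi$ with $S\circ\pi=\pi\circ U$. $\psi_f(\nu)=\min\{\int f\,d\lambda:\lambda\in\mathcal{M}_U(Z),\ \pi_*\lambda=\nu\}$. *)

theory Defs
  imports "HOL-Analysis.Analysis" "HOL-Probability.Probability"
begin

definition tds :: "('a::metric_space \<Rightarrow> 'a) \<Rightarrow> bool" where
  "tds T \<longleftrightarrow> compact (UNIV :: 'a set) \<and> (\<exists>T'. homeomorphism UNIV UNIV T T')"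

definition factor_map ::
  "('z::metric_space \<Rightarrow> 'z) \<Rightarrow> ('y::metric_space \<Rightarrow> 'y) \<Rightarrow> ('z \<Rightarrow> 'y) \<Rightarrow> bool" where
  "factor_map U S p \<longleftrightarrow> continuous_on UNIV p \<and> surj p \<and> S \<circ> p = p \<circ> U"

definition borel_prob_measures :: "('a::topological_space) measure set" where
  "borel_prob_measures = {\<mu>. sets \<mu> = sets borel \<and> prob_space \<mu>}"

definition invariant_measures :: "('a::topological_space \<Rightarrow> 'a) \<Rightarrow> 'a measure set" where
  "invariant_measures T = {\<mu> \<in> borel_prob_measures. distr \<mu> borel T = \<mu>}"

definition weak_star_topology :: "('a::topological_space) measure topology" where
  "weak_star_topology = topology_generated_by
     {{\<mu> \<in> borel_prob_measures. integral\<^sup>L \<mu> g \<in> V} | (g :: 'a \<Rightarrow> real) V.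
        continuous_on UNIV g \<and> open V}"

definition lower_semicontinuous_on_top :: "'a topology \<Rightarrow> ('a \<Rightarrow> real) \<Rightarrow> bool" where
  "lower_semicontinuous_on_top X h \<longleftrightarrow> (\<forall>a. openin X {x \<in> topspace X. a < h x})"

definition mix_measure :: "real \<Rightarrow> 'a measure \<Rightarrow> 'a measure \<Rightarrow> 'a measure" where
  "mix_measure t \<mu> \<nu> = measure_of (space \<mu>) (sets \<mu>)
     (\<lambda>A. ennreal t * emeasure \<mu> A + ennreal (1 - t) * emeasure \<nu> A)"

text \<open>psi_f(nu) = min { integral f d lambda : lambda in M_U(Z), pi_* lambda = nu }
  (the minimum is attained; we write it as the infimum of the set).\<close>
definition psi ::
  "('z::topological_space \<Rightarrow> 'z) \<Rightarrow> ('z \<Rightarrow> 'y::topological_space) \<Rightarrow> ('z \<Rightarrow> real)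
    \<Rightarrow> 'y measure \<Rightarrow> real" where
  "psi U p f \<nu> = Inf {integral\<^sup>L m f | m. m \<in> invariant_measures U \<and> distr m borel p = \<nu>}"

end

(*
  Convexity: a convex combination of nearly optimal lifts of nu1 and nu2 is an
  invariant lift of the same convex combination of nu1 and nu2. Lower semicontinuity: if invariant
  measures with psi <= a accumulate at nu, nearly optimal lifts of them have a weak* limit point,
  because Borel probability measures on a compact metric space are weak* sequentially compact; the
  limit point is again U-invariant, it lifts nu, and its integral of f is at most a. The lifts exist
  by the Krylov-Bogolyubov argument, so the infimum is taken over a nonempty bounded set. Weak*
  sequential compactness is reduced to Helly's selection theorem by coding the compact space as a
  continuous image of a compact set of reals that has a Borel section.
*)
theory Submission
  imports Defs
begin

section \<open>Coding a compact metric space by a compact set of reals\<close>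

locale sparse_expansion =
  fixes N :: "nat \<Rightarrow> nat"
  assumes N_pos: "\<And>k. 0 < N k"
begin

definition denom :: "nat \<Rightarrow> real" where
  "denom k = (\<Prod>j<k. 3 * real (N j))"

definition place_value :: "(nat \<Rightarrow> nat) \<Rightarrow> nat \<Rightarrow> real" where
  "place_value a k = real (a k) / denom (Suc k)"

definition admissible :: "(nat \<Rightarrow> nat) \<Rightarrow> bool" where
  "admissible a \<longleftrightarrow> (\<forall>k. a k < N k)"

text \<open>The k-th digit is written in radix 3 N k but only uses the digits below N k; the unused
  gaps make the expansion injective, with distinct digit sequences well separated.\<close>
definition expansion :: "(nat \<Rightarrow> nat) \<Rightarrow> real" where
  "expansion a = (\<Sum>k. place_value a k)"

lemma denom_pos: "0 < denom k"
  unfolding denom_def using N_pos by (intro prod_pos) auto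

lemma denom_Suc: "denom (Suc k) = 3 * real (N k) * denom k"
  unfolding denom_def by (simp add: mult.commute)

lemma denom_ge: "3 ^ i * denom m \<le> denom (m + i)"
proof (induction i)
  case (Suc i)
  have "1 \<le> N (m + i)" using N_pos[of "m + i"] by simp
  then have "3 * denom (m + i) \<le> 3 * real (N (m + i)) * denom (m + i)"
    using denom_pos[of "m + i"] by (simp add: mult_right_mono)
  with Suc show ?case by (simp add: denom_Suc)
qed simp

lemma denom_mono:
  assumes "m \<le> k" shows "denom m \<le> denom k"
proof -
  have "denom m \<le> 3 ^ (k - m) * denom m" using denom_pos[of m] by simp
  also have "\<dots> \<le> denom k" using denom_ge[of "k - m" m] assms by simp
  finally show ?thesis .
qed

lemma inverse_denom_le: "1 / denom k \<le> (1/3) ^ k"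
  using denom_ge[of k 0] denom_pos[of k] by (simp add: denom_def field_simps power_one_over)

lemma place_value_N: "place_value N k = 1 / (3 * denom k)"
  using N_pos[of k] denom_pos[of k] by (simp add: place_value_def denom_Suc field_simps)

lemma place_value_N_shift_le: "place_value N (j + m) \<le> (1/3) ^ j * (1 / (3 * denom m))"
proof -
  have "1 / (3 * denom (j + m)) \<le> 1 / (3 * (3 ^ j * denom m))"
    using denom_ge[of j m] denom_pos[of m] denom_pos[of "j + m"]
    by (intro divide_left_mono) (auto simp: add.commute)
  then show ?thesis by (simp add: place_value_N power_one_over)
qed

lemma place_value_nonneg: "0 \<le> place_value a k"
  using denom_pos[of "Suc k"] by (simp add: place_value_def)

lemma geometric_third_sums: "(\<lambda>j. (1/3::real) ^ j * c) sums (3/2 * c)"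
  using sums_mult2[OF geometric_sums[of "1/3::real"], of c] by simp

lemma summable_place_value_N_shift: "summable (\<lambda>j. place_value N (j + m))"
  by (rule summable_comparison_test[OF _ sums_summable[OF geometric_third_sums]])
     (auto intro!: exI[of _ 0] place_value_N_shift_le simp: abs_of_nonneg place_value_nonneg)

lemma place_value_N_tail_le: "(\<Sum>j. place_value N (j + m)) \<le> 1 / (2 * denom m)"
proof -
  have "(\<Sum>j. place_value N (j + m)) \<le> (\<Sum>j. (1/3) ^ j * (1 / (3 * denom m)))"
    by (rule suminf_le[OF place_value_N_shift_le summable_place_value_N_shift
          sums_summable[OF geometric_third_sums]])
  also have "\<dots> = 3/2 * (1 / (3 * denom m))"
    using geometric_third_sums sums_unique by metis
  also have "\<dots> = 1 / (2 * denom m)" by simp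
  finally show ?thesis .
qed

lemma place_value_le: "admissible a \<Longrightarrow> place_value a k \<le> place_value N k"
  using denom_pos[of "Suc k"]
  by (auto simp: place_value_def admissible_def less_imp_le intro!: divide_right_mono)

lemma abs_place_value_diff_le:
  assumes "admissible a" "admissible b"
  shows "\<bar>place_value a k - place_value b k\<bar> \<le> place_value N k"
  using place_value_le[OF assms(1), of k] place_value_le[OF assms(2), of k]
    place_value_nonneg[of a k] place_value_nonneg[of b k] by linarith

lemma summable_place_value: "admissible a \<Longrightarrow> summable (place_value a)"
  using summable_comparison_test'[OF summable_place_value_N_shift[of 0], of 0 "place_value a"]
    place_value_le place_value_nonneg by simp

lemma expansion_nonneg: "admissible a \<Longrightarrow> 0 \<le> expansion a"
  unfolding expansion_def by (intro suminf_nonneg summable_place_value place_value_nonneg)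

lemma expansion_le_half: "admissible a \<Longrightarrow> expansion a \<le> 1/2"
proof -
  assume a: "admissible a"
  have "expansion a \<le> (\<Sum>j. place_value N (j + 0))"
    unfolding expansion_def using place_value_le[OF a] summable_place_value[OF a]
      summable_place_value_N_shift[of 0] by (intro suminf_le) auto
  also have "\<dots> \<le> 1 / (2 * denom 0)" by (rule place_value_N_tail_le)
  finally show ?thesis by (simp add: denom_def)
qed

lemma expansion_diff_split:
  assumes "admissible a" "admissible b"
  shows "expansion a - expansion b =
    (\<Sum>j. place_value a (j + m) - place_value b (j + m)) + (\<Sum>j<m. place_value a j - place_value b j)"
  unfolding expansion_def suminf_diff[OF summable_place_value[OF assms(1)] summable_place_value[OF assms(2)]]
  by (rule suminf_split_initial_segment[OF summable_diff[OF summable_place_value[OF assms(1)]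
        summable_place_value[OF assms(2)]]])

lemma abs_tail_diff_le:
  assumes a: "admissible a" and b: "admissible b"
  shows "\<bar>\<Sum>j. place_value a (j + m) - place_value b (j + m)\<bar> \<le> 1 / (2 * denom m)"
proof -
  have s: "summable (\<lambda>j. \<bar>place_value a (j + m) - place_value b (j + m)\<bar>)"
    by (rule summable_comparison_test'[OF summable_place_value_N_shift[of m], of 0])
       (simp add: abs_place_value_diff_le[OF a b])
  have "\<bar>\<Sum>j. place_value a (j + m) - place_value b (j + m)\<bar>
      \<le> (\<Sum>j. \<bar>place_value a (j + m) - place_value b (j + m)\<bar>)"
    using summable_norm[of "\<lambda>j. place_value a (j + m) - place_value b (j + m)"] s by simp
  also have "\<dots> \<le> (\<Sum>j. place_value N (j + m))"
    using s summable_place_value_N_shift abs_place_value_diff_le[OF a b] by (intro suminf_le) auto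
  also have "\<dots> \<le> 1 / (2 * denom m)" by (rule place_value_N_tail_le)
  finally show ?thesis .
qed

lemma expansion_close:
  assumes a: "admissible a" and b: "admissible b" and eq: "\<And>j. j < m \<Longrightarrow> a j = b j"
  shows "\<bar>expansion a - expansion b\<bar> \<le> 1 / (2 * denom m)"
proof -
  have "(\<Sum>j<m. place_value a j - place_value b j) = 0" by (simp add: place_value_def eq)
  then show ?thesis using expansion_diff_split[OF a b, of m] abs_tail_diff_le[OF a b, of m] by simp
qed

lemma expansion_separated:
  assumes a: "admissible a" and b: "admissible b"
    and eq: "\<And>j. j < m \<Longrightarrow> a j = b j" and ne: "a m \<noteq> b m"
  shows "1 / (2 * denom (Suc m)) \<le> \<bar>expansion a - expansion b\<bar>"
proof -
  have "(\<Sum>j<Suc m. place_value a j - place_value b j) = place_value a m - place_value b m"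
    by (simp add: place_value_def eq)
  then have split: "expansion a - expansion b =
      (\<Sum>j. place_value a (j + Suc m) - place_value b (j + Suc m)) + (place_value a m - place_value b m)"
    using expansion_diff_split[OF a b, of "Suc m"] by simp
  have "1 \<le> \<bar>real (a m) - real (b m)\<bar>" using ne by linarith
  then have "1 / denom (Suc m) \<le> \<bar>real (a m) - real (b m)\<bar> / denom (Suc m)"
    using denom_pos[of "Suc m"] by (intro divide_right_mono) auto
  then have "1 / denom (Suc m) \<le> \<bar>place_value a m - place_value b m\<bar>"
    using denom_pos[of "Suc m"] by (simp add: place_value_def diff_divide_distrib[symmetric] abs_divide)
  then show ?thesis using split abs_tail_diff_le[OF a b, of "Suc m"] by linarith
qed

lemma expansion_agree:
  assumes a: "admissible a" and b: "admissible b"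
    and close: "\<bar>expansion a - expansion b\<bar> < 1 / (2 * denom (Suc k))"
  shows "\<forall>j\<le>k. a j = b j"
proof (rule ccontr)
  assume "\<not> (\<forall>j\<le>k. a j = b j)"
  then have ex: "\<exists>j. j \<le> k \<and> a j \<noteq> b j" by auto
  define m where "m = (LEAST j. j \<le> k \<and> a j \<noteq> b j)"
  have m: "m \<le> k" "a m \<noteq> b m" using LeastI_ex[OF ex] unfolding m_def by auto
  have "a j = b j" if "j < m" for j
    using that m(1) not_less_Least[of j "\<lambda>j. j \<le> k \<and> a j \<noteq> b j"] unfolding m_def by auto
  then have "1 / (2 * denom (Suc m)) \<le> \<bar>expansion a - expansion b\<bar>"
    by (rule expansion_separated[OF a b _ m(2)])
  moreover have "1 / (2 * denom (Suc k)) \<le> 1 / (2 * denom (Suc m))"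
    using denom_mono[of "Suc m" "Suc k"] m(1) denom_pos by (intro divide_left_mono) auto
  ultimately show False using close by linarith
qed

lemma expansion_inj:
  assumes "admissible a" "admissible b" "expansion a = expansion b"
  shows "a = b"
proof
  fix k
  have "\<bar>expansion a - expansion b\<bar> < 1 / (2 * denom (Suc k))"
    using assms(3) denom_pos[of "Suc k"] by simp
  then show "a k = b k" using expansion_agree[OF assms(1,2)] by blast
qed

end

locale net_coding = sparse_expansion N for N +
  fixes e :: "nat \<Rightarrow> nat \<Rightarrow> 'a::metric_space"
  assumes net: "\<And>k z. \<exists>i<N k. dist z (e k i) \<le> (1/2)^k"
    and Cauchy_convergent: "\<And>X::nat \<Rightarrow> 'a. Cauchy X \<Longrightarrow> convergent X"
begin

text \<open>An address a selects the net point e k (a k) on level k; coherence makes these points a Cauchy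
  sequence, and its limit is the point with address a.\<close>
definition coherent :: "(nat \<Rightarrow> nat) \<Rightarrow> bool" where
  "coherent a \<longleftrightarrow> admissible a \<and> (\<forall>k. dist (e k (a k)) (e (Suc k) (a (Suc k))) \<le> 2 * (1/2)^k)"

definition limit_point :: "(nat \<Rightarrow> nat) \<Rightarrow> 'a" where
  "limit_point a = lim (\<lambda>k. e k (a k))"

definition codes :: "real set" where
  "codes = expansion ` Collect coherent"

definition decode :: "real \<Rightarrow> 'a" where
  "decode x = limit_point (SOME a. coherent a \<and> expansion a = x)"

definition address :: "'a \<Rightarrow> nat \<Rightarrow> nat" where
  "address z k = (LEAST i. i < N k \<and> dist z (e k i) \<le> (1/2)^k)"

definition encode :: "'a \<Rightarrow> real" where
  "encode z = expansion (address z)"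

lemma coherent_admissible: "coherent a \<Longrightarrow> admissible a"
  unfolding coherent_def by blast

lemma coherent_dist_le:
  assumes a: "coherent a" and "k \<le> m"
  shows "dist (e k (a k)) (e m (a m)) \<le> 4 * (1/2)^k"
proof -
  have "dist (e k (a k)) (e (k + i) (a (k + i))) \<le> 4 * (1/2)^k - 4 * (1/2)^(k + i)" for i
  proof (induction i)
    case (Suc i)
    have "dist (e (k + i) (a (k + i))) (e (Suc (k + i)) (a (Suc (k + i)))) \<le> 2 * (1/2)^(k + i)"
      using a unfolding coherent_def by blast
    then show ?case
      using Suc dist_triangle[of "e k (a k)" "e (k + Suc i) (a (k + Suc i))" "e (k + i) (a (k + i))"]
      by simp
  qed simp
  from this[of "m - k"] have "dist (e k (a k)) (e m (a m)) \<le> 4 * (1/2)^k - 4 * (1/2)^m"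
    using \<open>k \<le> m\<close> by simp
  then show ?thesis using zero_le_power[of "1/2::real" m] by linarith
qed

lemma coherent_Cauchy:
  assumes a: "coherent a" shows "Cauchy (\<lambda>k. e k (a k))"
proof (rule metric_CauchyI)
  fix r :: real assume "0 < r"
  then obtain M where M: "(1/2::real)^M < r/8" using real_arch_pow_inv[of "r/8" "1/2"] by auto
  show "\<exists>M. \<forall>m\<ge>M. \<forall>n\<ge>M. dist (e m (a m)) (e n (a n)) < r"
  proof (intro exI[of _ M] allI impI)
    fix m n assume "M \<le> m" "M \<le> n"
    then have "dist (e M (a M)) (e m (a m)) \<le> 4 * (1/2)^M" "dist (e M (a M)) (e n (a n)) \<le> 4 * (1/2)^M"
      using coherent_dist_le[OF a] by auto
    then show "dist (e m (a m)) (e n (a n)) < r"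
      using M dist_triangle3[of "e m (a m)" "e n (a n)" "e M (a M)"] by linarith
  qed
qed

lemma limit_point_tendsto: "coherent a \<Longrightarrow> (\<lambda>k. e k (a k)) \<longlonglongrightarrow> limit_point a"
  unfolding limit_point_def using Cauchy_convergent[OF coherent_Cauchy]
  by (simp add: convergent_LIMSEQ_iff)

lemma dist_limit_point_le:
  assumes a: "coherent a" shows "dist (e k (a k)) (limit_point a) \<le> 4 * (1/2)^k"
proof -
  have "(\<lambda>i. dist (e k (a k)) (e (i + k) (a (i + k)))) \<longlonglongrightarrow> dist (e k (a k)) (limit_point a)"
    using LIMSEQ_ignore_initial_segment[OF limit_point_tendsto[OF a], of k] by (intro tendsto_intros)
  then show ?thesis by (rule LIMSEQ_le_const2) (use coherent_dist_le[OF a] in auto)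
qed

lemma dist_limit_point_agree_le:
  assumes "coherent a" "coherent b" "a k = b k"
  shows "dist (limit_point a) (limit_point b) \<le> 8 * (1/2)^k"
  using dist_limit_point_le[OF assms(1), of k] dist_limit_point_le[OF assms(2), of k] assms(3)
    dist_triangle3[of "limit_point a" "limit_point b" "e k (a k)"] by (simp add: dist_commute)

lemma address_less: "address z k < N k" and dist_address_le: "dist z (e k (address z k)) \<le> (1/2)^k"
proof -
  have "address z k < N k \<and> dist z (e k (address z k)) \<le> (1/2)^k"
    unfolding address_def by (rule LeastI_ex) (use net[of k z] in blast)
  then show "address z k < N k" "dist z (e k (address z k)) \<le> (1/2)^k" by auto
qed

lemma coherent_address: "coherent (address z)"
proof -
  have "dist (e k (address z k)) (e (Suc k) (address z (Suc k))) \<le> 2 * (1/2)^k" for k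
    using dist_address_le[of z k] dist_address_le[of z "Suc k"]
      dist_triangle3[of "e k (address z k)" "e (Suc k) (address z (Suc k))" z]
      zero_le_power[of "1/2::real" k] by (simp; linarith)
  then show ?thesis unfolding coherent_def admissible_def using address_less by blast
qed

lemma limit_point_address: "limit_point (address z) = z"
proof (rule LIMSEQ_unique[OF limit_point_tendsto[OF coherent_address]])
  have "(\<lambda>k. dist (e k (address z k)) z) \<longlonglongrightarrow> 0"
  proof (rule tendsto_sandwich[of "\<lambda>_. 0" _ _ "\<lambda>k. (1/2)^k"])
    show "\<forall>\<^sub>F k in sequentially. dist (e k (address z k)) z \<le> (1/2)^k"
      using dist_address_le[of z] by (simp add: dist_commute)
    show "(\<lambda>k. (1/2::real)^k) \<longlonglongrightarrow> 0" by (rule LIMSEQ_power_zero) simp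
  qed auto
  then show "(\<lambda>k. e k (address z k)) \<longlonglongrightarrow> z" by (rule tendsto_dist_iff[THEN iffD2])
qed

lemma decode_expansion: "coherent a \<Longrightarrow> decode (expansion a) = limit_point a"
proof -
  assume a: "coherent a"
  let ?b = "SOME b. coherent b \<and> expansion b = expansion a"
  have "coherent ?b \<and> expansion ?b = expansion a" by (rule someI[of _ a]) (use a in simp)
  then have "?b = a" using expansion_inj a coherent_admissible by blast
  then show ?thesis unfolding decode_def by simp
qed

lemma decode_encode: "decode (encode z) = z"
  unfolding encode_def by (simp add: decode_expansion[OF coherent_address] limit_point_address)

lemma encode_in_codes: "encode z \<in> codes"
  unfolding encode_def codes_def using coherent_address by auto

lemma codes_subset: "codes \<subseteq> {0..1/2}"
  unfolding codes_def using expansion_nonneg expansion_le_half coherent_admissible by auto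

lemma continuous_on_decode: "continuous_on codes decode"
proof (clarsimp simp: continuous_on_iff)
  fix x r assume x: "x \<in> codes" and r: "(0::real) < r"
  obtain M where M: "(1/2::real)^M < r/8" using real_arch_pow_inv[of "r/8" "1/2"] r by auto
  show "\<exists>d>0. \<forall>y\<in>codes. dist y x < d \<longrightarrow> dist (decode y) (decode x) < r"
  proof (intro exI[of _ "1 / (2 * denom (Suc M))"] conjI ballI impI)
    show "0 < 1 / (2 * denom (Suc M))" using denom_pos[of "Suc M"] by simp
    fix y assume y: "y \<in> codes" and d: "dist y x < 1 / (2 * denom (Suc M))"
    obtain a b where a: "coherent a" "x = expansion a" and b: "coherent b" "y = expansion b"
      using x y unfolding codes_def by auto
    have "b M = a M"
      using expansion_agree[OF coherent_admissible[OF b(1)] coherent_admissible[OF a(1)]] d a b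
      by (simp add: dist_real_def)
    then have "dist (limit_point b) (limit_point a) \<le> 8 * (1/2)^M"
      by (rule dist_limit_point_agree_le[OF b(1) a(1)])
    then show "dist (decode y) (decode x) < r" using M a b by (simp add: decode_expansion)
  qed
qed

lemma Cauchy_expansion_digits_stable:
  assumes as: "\<And>n. admissible (as n)" and C: "Cauchy (\<lambda>n. expansion (as n))"
  obtains M where "\<And>k m n j. M k \<le> m \<Longrightarrow> M k \<le> n \<Longrightarrow> j \<le> k \<Longrightarrow> as m j = as n j"
proof -
  have "\<exists>M. \<forall>m\<ge>M. \<forall>n\<ge>M. dist (expansion (as m)) (expansion (as n)) < 1 / (2 * denom (Suc k))" for k
    using C[unfolded Cauchy_def] denom_pos[of "Suc k"] by simp
  then obtain M where "\<And>k m n. M k \<le> m \<Longrightarrow> M k \<le> n \<Longrightarrow>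
      \<bar>expansion (as m) - expansion (as n)\<bar> < 1 / (2 * denom (Suc k))"
    unfolding dist_real_def by metis
  then show ?thesis using that expansion_agree[OF as as] by blast
qed

lemma Cauchy_expansion_converges:
  assumes as: "\<And>n. coherent (as n)" and C: "Cauchy (\<lambda>n. expansion (as n))"
  obtains a where "coherent a" "(\<lambda>n. expansion (as n)) \<longlonglongrightarrow> expansion a"
proof -
  obtain M where M: "\<And>k m n j. M k \<le> m \<Longrightarrow> M k \<le> n \<Longrightarrow> j \<le> k \<Longrightarrow> as m j = as n j"
    using Cauchy_expansion_digits_stable[of as] coherent_admissible[OF as] C by blast
  define a where "a k = as (M k) k" for k
  have a_eq: "as n j = a j" if "M k \<le> n" "j \<le> k" for n k j
  proof -
    have "as n j = as (max (M j) n) j" using M[of k n "max (M j) n" j] that by simp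
    also have "\<dots> = a j" using M[of j "max (M j) n" "M j" j] unfolding a_def by simp
    finally show ?thesis .
  qed
  have "coherent a"
    unfolding coherent_def admissible_def
  proof (intro conjI allI)
    fix k
    show "a k < N k" using as[of "M k"] unfolding a_def coherent_def admissible_def by blast
    have "a k = as (M (Suc k)) k" "a (Suc k) = as (M (Suc k)) (Suc k)"
      using a_eq[of "Suc k" "M (Suc k)"] by auto
    then show "dist (e k (a k)) (e (Suc k) (a (Suc k))) \<le> 2 * (1/2)^k"
      using as[of "M (Suc k)"] unfolding coherent_def by simp
  qed
  moreover have "(\<lambda>n. expansion (as n)) \<longlonglongrightarrow> expansion a"
  proof (rule LIMSEQ_I)
    fix r :: real assume "0 < r"
    then obtain k where k: "(1/3::real)^k < 2 * r" using real_arch_pow_inv[of "2 * r" "1/3"] by auto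
    have "\<bar>expansion (as n) - expansion a\<bar> < r" if "M k \<le> n" for n
    proof -
      have "\<bar>expansion (as n) - expansion a\<bar> \<le> 1 / (2 * denom k)"
        using expansion_close[OF coherent_admissible[OF as] coherent_admissible[OF \<open>coherent a\<close>]]
          a_eq[OF that] by simp
      also have "\<dots> < r" using inverse_denom_le[of k] k by simp
      finally show ?thesis .
    qed
    then show "\<exists>n0. \<forall>n\<ge>n0. norm (expansion (as n) - expansion a) < r" by auto
  qed
  ultimately show ?thesis using that by blast
qed

lemma closed_codes: "closed codes"
  unfolding closed_sequential_limits
proof (intro allI impI, elim conjE)
  fix xs :: "nat \<Rightarrow> real" and l assume xs: "\<forall>n. xs n \<in> codes" and lim: "xs \<longlonglongrightarrow> l"
  from xs have "\<forall>n. \<exists>a. coherent a \<and> xs n = expansion a" unfolding codes_def by auto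
  then obtain as where as: "\<And>n. coherent (as n)" "\<And>n. xs n = expansion (as n)"
    unfolding choice_iff by blast
  have xs_eq: "xs = (\<lambda>n. expansion (as n))" using as(2) by auto
  obtain a where "coherent a" "xs \<longlonglongrightarrow> expansion a"
    using Cauchy_expansion_converges[of as, OF as(1)] LIMSEQ_imp_Cauchy[OF lim] unfolding xs_eq by blast
  then show "l \<in> codes" unfolding codes_def using LIMSEQ_unique[OF lim] by auto
qed

lemma compact_codes: "compact codes"
  using closed_codes codes_subset bounded_subset[OF bounded_closed_interval]
  by (auto simp: compact_eq_bounded_closed)

lemma measurable_encode: "encode \<in> borel_measurable borel"
proof -
  have [measurable]: "(\<lambda>z. dist z (e k i)) \<in> borel_measurable borel" for k i
    by (intro borel_measurable_continuous_onI continuous_intros)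
  have [measurable]: "(\<lambda>z. address z k) \<in> measurable borel (count_space UNIV)" for k
    unfolding address_def by measurable
  show ?thesis unfolding encode_def expansion_def place_value_def by measurable
qed

end

lemma compact_metric_finite_net:
  assumes "compact (UNIV :: 'a::metric_space set)" and "0 < r"
  shows "\<exists>(n::nat) x. 0 < n \<and> (\<forall>z. \<exists>i<n. dist z (x i :: 'a) \<le> r)"
proof -
  obtain C where C: "finite C" "(UNIV :: 'a set) \<subseteq> (\<Union>c\<in>C. ball c r)"
    using seq_compact_imp_totally_bounded[OF compact_imp_seq_compact[OF assms(1)], rule_format, OF assms(2)]
    by blast
  obtain xs where xs: "set xs = C" using finite_list[OF C(1)] by blast
  have "\<exists>i<length xs. dist z (xs ! i) \<le> r" for z
  proof -
    obtain c where c: "c \<in> C" "z \<in> ball c r" using subsetD[OF C(2), of z] by blast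
    then obtain i where "i < length xs" "xs ! i = c" using xs by (auto simp: in_set_conv_nth)
    then show ?thesis using c by (intro exI[of _ i]) (simp add: dist_commute)
  qed
  moreover have "xs \<noteq> []" using C(2) xs by force
  ultimately show ?thesis by (intro exI[of _ "length xs"] exI[of _ "(!) xs"]) simp
qed

text \<open>Points are coded by the digit expansions of their addresses in a sequence of
  (1/2)^k-nets.\<close>
theorem compact_metric_coding:
  assumes "compact (UNIV :: 'a::metric_space set)"
  obtains K :: "real set" and R :: "real \<Rightarrow> 'a::metric_space" and c :: "'a \<Rightarrow> real"
  where "compact K" "continuous_on K R" "R \<in> borel_measurable borel"
    "c \<in> borel_measurable borel" "\<And>z. c z \<in> K" "\<And>z. R (c z) = z"
proof -
  have "\<forall>k. \<exists>(n::nat) e. 0 < n \<and> (\<forall>z. \<exists>i<n. dist z (e i :: 'a) \<le> (1/2)^k)"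
    using compact_metric_finite_net[OF assms] by simp
  from choice[OF this] obtain N :: "nat \<Rightarrow> nat"
    where "\<forall>k. \<exists>e. 0 < N k \<and> (\<forall>z. \<exists>i<N k. dist z (e i :: 'a) \<le> (1/2)^k)" by blast
  from choice[OF this] obtain e
    where "\<forall>k. 0 < N k \<and> (\<forall>z. \<exists>i<N k. dist z (e k i :: 'a) \<le> (1/2)^k)" by blast
  moreover have "Cauchy X \<Longrightarrow> convergent X" for X :: "nat \<Rightarrow> 'a"
    using compact_imp_complete[OF assms] unfolding complete_def convergent_def by blast
  ultimately interpret net_coding N e by unfold_locales simp_all
  define R where "R x = (if x \<in> codes then decode x else decode 0)" for x
  have "continuous_on codes R"
    using continuous_on_decode by (rule continuous_on_cong[THEN iffD1, rotated 2]) (simp_all add: R_def)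
  moreover have "R \<in> borel_measurable borel"
    unfolding R_def using closed_codes continuous_on_decode
    by (intro borel_measurable_continuous_on_if) (auto intro: continuous_on_const)
  moreover have "R (encode z) = z" for z
    using encode_in_codes decode_encode by (simp add: R_def)
  ultimately show ?thesis using that[OF compact_codes _ _ measurable_encode encode_in_codes] by blast
qed

section \<open>Borel probability measures\<close>

lemma prob_space_borel_prob: "\<mu> \<in> borel_prob_measures \<Longrightarrow> prob_space \<mu>"
  unfolding borel_prob_measures_def by auto

lemma sets_borel_prob: "\<mu> \<in> borel_prob_measures \<Longrightarrow> sets \<mu> = sets borel"
  unfolding borel_prob_measures_def by auto

lemma space_borel_prob: "\<mu> \<in> borel_prob_measures \<Longrightarrow> space \<mu> = UNIV"
  using sets_eq_imp_space_eq[OF sets_borel_prob] by simp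

lemma measurable_borel_prob:
  "\<mu> \<in> borel_prob_measures \<Longrightarrow> f \<in> measurable borel N \<Longrightarrow> f \<in> measurable \<mu> N"
  using measurable_cong_sets[OF sets_borel_prob refl] by blast

lemma distr_borel_prob:
  assumes "\<mu> \<in> borel_prob_measures" "f \<in> borel_measurable borel"
  shows "distr \<mu> borel f \<in> borel_prob_measures"
proof -
  interpret prob_space \<mu> by (rule prob_space_borel_prob[OF assms(1)])
  show ?thesis unfolding borel_prob_measures_def
    using prob_space_distr[OF measurable_borel_prob[OF assms]] by simp
qed

lemma integral_distr_borel_prob:
  fixes g :: "_ \<Rightarrow> real"
  assumes "\<mu> \<in> borel_prob_measures" "f \<in> borel_measurable borel" "g \<in> borel_measurable borel"
  shows "integral\<^sup>L (distr \<mu> borel f) g = (\<integral>x. g (f x) \<partial>\<mu>)"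
  by (rule integral_distr[OF measurable_borel_prob[OF assms(1,2)] assms(3)])

lemma integrable_borel_prob_bounded:
  fixes g :: "_ \<Rightarrow> real"
  assumes "\<mu> \<in> borel_prob_measures" "g \<in> borel_measurable borel" "\<And>x. \<bar>g x\<bar> \<le> B"
  shows "integrable \<mu> g"
proof -
  interpret prob_space \<mu> by (rule prob_space_borel_prob[OF assms(1)])
  show ?thesis
    using assms(3) measurable_borel_prob[OF assms(1,2)] by (intro integrable_const_bound[of _ B]) auto
qed

lemma continuous_on_compact_UNIV_bounded:
  fixes g :: "'a::topological_space \<Rightarrow> real"
  assumes "compact (UNIV :: 'a set)" "continuous_on UNIV g"
  obtains B where "\<And>x. \<bar>g x\<bar> \<le> B"
proof -
  have "bounded (range g)" by (rule compact_imp_bounded[OF compact_continuous_image[OF assms(2,1)]])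
  then obtain B where "\<forall>y\<in>range g. norm y \<le> B" unfolding bounded_iff by blast
  then show ?thesis using that by auto
qed

section \<open>Weak* convergence on a compact metric space\<close>

definition weak_star_conv :: "(nat \<Rightarrow> 'a::topological_space measure) \<Rightarrow> 'a measure \<Rightarrow> bool" where
  "weak_star_conv \<mu>s \<mu> \<longleftrightarrow>
    (\<forall>g :: 'a \<Rightarrow> real. continuous_on UNIV g \<longrightarrow> (\<lambda>n. integral\<^sup>L (\<mu>s n) g) \<longlonglongrightarrow> integral\<^sup>L \<mu> g)"

lemma weak_star_convD:
  fixes g :: "'a::topological_space \<Rightarrow> real"
  shows "weak_star_conv \<mu>s \<mu> \<Longrightarrow> continuous_on UNIV g \<Longrightarrow> (\<lambda>n. integral\<^sup>L (\<mu>s n) g) \<longlonglongrightarrow> integral\<^sup>L \<mu> g"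
  unfolding weak_star_conv_def by blast

lemma weak_conv_m_AE_closed:
  fixes K :: "real set"
  assumes \<rho>: "\<And>n. real_distribution (\<rho> n)" and M: "real_distribution M" and conv: "weak_conv_m \<rho> M"
    and K: "closed K" "K \<noteq> {}" and supp: "\<And>n. AE x in \<rho> n. x \<in> K"
  shows "AE x in M. x \<in> K"
proof -
  interpret M: real_distribution M by (rule M)
  define \<phi> where "\<phi> x = min 1 (infdist x K)" for x
  have \<phi>_cont: "isCont \<phi> x" for x
    unfolding \<phi>_def by (intro continuous_intros)
  have \<phi>_borel[measurable]: "\<phi> \<in> borel_measurable borel"
    using \<phi>_cont by (intro borel_measurable_continuous_onI continuous_at_imp_continuous_on) auto
  have "integral\<^sup>L (\<rho> n) \<phi> = 0" for n
  proof -
    interpret real_distribution "\<rho> n" by (rule \<rho>)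
    have "AE x in \<rho> n. \<phi> x = 0" using supp[of n] by eventually_elim (simp add: \<phi>_def infdist_zero)
    then have "integral\<^sup>L (\<rho> n) \<phi> = integral\<^sup>L (\<rho> n) (\<lambda>_. 0)"
      by (intro integral_cong_AE) measurable
    then show ?thesis by simp
  qed
  moreover have "(\<lambda>n. integral\<^sup>L (\<rho> n) \<phi>) \<longlonglongrightarrow> integral\<^sup>L M \<phi>"
    by (rule weak_conv_imp_integral_bdd_continuous_conv[OF \<rho> M conv, where B=1])
       (auto simp: \<phi>_cont \<phi>_def infdist_nonneg)
  ultimately have "integral\<^sup>L M \<phi> = 0" by (simp add: LIMSEQ_const_iff)
  moreover have "integrable M \<phi>"
    by (rule M.integrable_const_bound[where B=1]) (auto simp: \<phi>_def infdist_nonneg)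
  ultimately have "AE x in M. \<phi> x = 0"
    using integral_nonneg_eq_0_iff_AE[of M \<phi>] by (auto simp: \<phi>_def infdist_nonneg)
  then show ?thesis
  proof eventually_elim
    case (elim x)
    then have "infdist x K = 0" unfolding \<phi>_def by (auto simp: min_def split: if_splits)
    then show "x \<in> K" using in_closure_iff_infdist_zero[OF K(2)] closure_closed[OF K(1)] by auto
  qed
qed

lemma real_distributions_compact_support_subseq:
  fixes \<rho> :: "nat \<Rightarrow> real measure"
  assumes \<rho>: "\<And>n. real_distribution (\<rho> n)" and K: "compact K" "K \<noteq> {}"
    and supp: "\<And>n. AE x in \<rho> n. x \<in> K"
  obtains r M where "strict_mono r" "real_distribution M" "weak_conv_m (\<rho> \<circ> r) M" "AE x in M. x \<in> K"
proof -
  obtain B where B: "\<And>x. x \<in> K \<Longrightarrow> \<bar>x\<bar> \<le> B"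
    using compact_imp_bounded[OF K(1)] unfolding bounded_iff by auto
  define b where "b = \<bar>B\<bar> + 1"
  have K_sub: "K \<subseteq> {-b<..b}"
  proof
    fix x assume "x \<in> K"
    then show "x \<in> {-b<..b}" using B[of x] unfolding b_def by auto
  qed
  have "tight \<rho>"
    unfolding tight_def
  proof (intro conjI allI impI \<rho>)
    fix \<epsilon> :: real assume "0 < \<epsilon>"
    have "1 - \<epsilon> < measure (\<rho> n) {-b<..b}" for n
    proof -
      interpret real_distribution "\<rho> n" by (rule \<rho>)
      have "AE x in \<rho> n. x \<in> {-b<..b}"
        using supp[of n] by (rule AE_mp) (intro AE_I2, use K_sub in blast)
      then have "prob {-b<..b} = 1" using prob_eq_1[of "{-b<..b}"] by simp
      then show ?thesis using \<open>0 < \<epsilon>\<close> by simp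
    qed
    moreover have "-b < b" unfolding b_def by simp
    ultimately show "\<exists>a b. a < b \<and> (\<forall>n. 1 - \<epsilon> < measure (\<rho> n) {a<..b})" by blast
  qed
  from tight_imp_convergent_subsubsequence[OF this strict_mono_id]
  obtain r M where r: "strict_mono r" and M: "real_distribution M" and conv: "weak_conv_m (\<rho> \<circ> r) M"
    by auto
  have "AE x in M. x \<in> K"
    by (rule weak_conv_m_AE_closed[OF _ M conv compact_imp_closed[OF K(1)] K(2)])
       (simp_all only: comp_apply \<rho> supp)
  then show ?thesis using that[OF r M conv] by blast
qed

lemma Tietze_compose:
  fixes R :: "'a::{metric_space,second_countable_topology} \<Rightarrow> 'b::topological_space"
    and g :: "'b \<Rightarrow> real"
  assumes "closed K" "continuous_on K R" "continuous_on UNIV g" "\<And>x. \<bar>g x\<bar> \<le> B"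
  obtains G where "continuous_on UNIV G" "\<And>x. x \<in> K \<Longrightarrow> G x = g (R x)" "\<And>x. norm (G x) \<le> B"
proof -
  have "continuous_on K (\<lambda>x. g (R x))" by (rule continuous_on_compose2[OF assms(3,2)]) auto
  then show ?thesis
    using Tietze[of K "\<lambda>x. g (R x)" UNIV B] that assms(1,4) order_trans[OF abs_ge_zero assms(4)]
    by (auto simp: closedin_closed_Int)
qed

text \<open>Prokhorov's theorem for compact metric spaces, reduced to Helly's selection theorem
  through the coding of the space by a compact set of reals.\<close>
theorem borel_prob_measures_seq_compact:
  fixes \<mu>s :: "nat \<Rightarrow> 'a::metric_space measure"
  assumes cpt: "compact (UNIV :: 'a set)" and \<mu>s: "\<And>n. \<mu>s n \<in> borel_prob_measures"
  obtains r \<mu> where "strict_mono r" "\<mu> \<in> borel_prob_measures" "weak_star_conv (\<mu>s \<circ> r) \<mu>"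
proof -
  obtain K and R :: "real \<Rightarrow> 'a" and c where K: "compact K" and R: "continuous_on K R"
    and R_borel[measurable]: "R \<in> borel_measurable borel" and c[measurable]: "c \<in> borel_measurable borel"
    and cK: "\<And>z. c z \<in> K" and Rc: "\<And>z. R (c z) = z"
    using compact_metric_coding[OF cpt] by blast
  define \<rho> where "\<rho> n = distr (\<mu>s n) borel c" for n
  have \<rho>: "real_distribution (\<rho> n)" for n
    using distr_borel_prob[OF \<mu>s c] unfolding \<rho>_def borel_prob_measures_def real_distribution_def
    by (auto simp: real_distribution_axioms_def)
  have K_ne: "K \<noteq> {}" using cK[of undefined] by auto
  have supp: "AE x in \<rho> n. x \<in> K" for n
    unfolding \<rho>_def using cK compact_imp_closed[OF K]
    by (subst AE_distr_iff) (auto intro!: measurable_borel_prob[OF \<mu>s c])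
  obtain r M where r: "strict_mono r" and M: "real_distribution M"
    and conv: "weak_conv_m (\<rho> \<circ> r) M" and AE_K: "AE x in M. x \<in> K"
    by (rule real_distributions_compact_support_subseq[OF \<rho> K K_ne supp])
  interpret M: real_distribution M by (rule M)
  define \<mu> where "\<mu> = distr M borel R"
  have \<mu>: "\<mu> \<in> borel_prob_measures"
    unfolding \<mu>_def borel_prob_measures_def by (auto intro!: M.prob_space_distr)
  have "(\<lambda>n. integral\<^sup>L (\<mu>s (r n)) g) \<longlonglongrightarrow> integral\<^sup>L \<mu> g" if g: "continuous_on UNIV g" for g :: "'a \<Rightarrow> real"
  proof -
    have [measurable]: "g \<in> borel_measurable borel" using g by (rule borel_measurable_continuous_onI)
    obtain B where B: "\<And>x. \<bar>g x\<bar> \<le> B" using continuous_on_compact_UNIV_bounded[OF cpt g] by blast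
    obtain G where G: "continuous_on UNIV G" "\<And>x. x \<in> K \<Longrightarrow> G x = g (R x)" "\<And>x. norm (G x) \<le> B"
      using Tietze_compose[OF compact_imp_closed[OF K] R g B] by blast
    have [measurable]: "G \<in> borel_measurable borel" using G(1) by (rule borel_measurable_continuous_onI)
    have "integral\<^sup>L ((\<rho> \<circ> r) n) G = integral\<^sup>L (\<mu>s (r n)) g" for n
      unfolding comp_def \<rho>_def using G(2) cK Rc by (simp add: integral_distr_borel_prob[OF \<mu>s])
    moreover have "integral\<^sup>L M G = integral\<^sup>L \<mu> g"
    proof -
      have "AE x in M. G x = g (R x)" using AE_K by eventually_elim (simp add: G(2))
      then have "integral\<^sup>L M G = (\<integral>x. g (R x) \<partial>M)" by (intro integral_cong_AE) auto
      then show ?thesis unfolding \<mu>_def by (simp add: integral_distr)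
    qed
    moreover have "(\<lambda>n. integral\<^sup>L ((\<rho> \<circ> r) n) G) \<longlonglongrightarrow> integral\<^sup>L M G"
      by (rule weak_conv_imp_integral_bdd_continuous_conv[OF _ M conv, where B=B])
         (use G \<rho> in \<open>auto simp: continuous_on_eq_continuous_at\<close>)
    ultimately show ?thesis by simp
  qed
  then show ?thesis using that[OF r \<mu>] unfolding weak_star_conv_def comp_def by blast
qed

section \<open>Probability measures determined by integrals of continuous functions\<close>

definition indicator_approx :: "'a::metric_space set \<Rightarrow> nat \<Rightarrow> 'a \<Rightarrow> real" where
  "indicator_approx F n x = max 0 (1 - real n * infdist x F)"

lemma continuous_on_indicator_approx: "continuous_on UNIV (indicator_approx F n)"
  unfolding indicator_approx_def by (intro continuous_intros)

lemma abs_indicator_approx_le: "\<bar>indicator_approx F n x\<bar> \<le> 1"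
  unfolding indicator_approx_def using infdist_nonneg[of x F] by auto

lemma indicator_approx_tendsto:
  assumes "closed F" "F \<noteq> {}"
  shows "(\<lambda>n. indicator_approx F n x) \<longlonglongrightarrow> indicator F x"
proof (cases "x \<in> F")
  case True
  then show ?thesis by (simp add: indicator_approx_def infdist_zero)
next
  case False
  then have d: "0 < infdist x F"
    using in_closure_iff_infdist_zero[OF assms(2)] closure_closed[OF assms(1)] infdist_nonneg[of x F]
    by (metis order_le_less)
  obtain M :: nat where M: "1 / infdist x F < real M" using reals_Archimedean2 by blast
  have "indicator_approx F n x = 0" if "M \<le> n" for n
  proof -
    have "1 < real M * infdist x F" using M d by (simp add: field_simps)
    also have "\<dots> \<le> real n * infdist x F" using that d by (intro mult_right_mono) auto
    finally show ?thesis unfolding indicator_approx_def by simp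
  qed
  then have "(\<lambda>n. indicator_approx F n x) \<longlonglongrightarrow> 0"
    by (intro tendsto_eventually) (auto simp: eventually_sequentially)
  then show ?thesis using False by simp
qed

lemma integral_indicator_approx_tendsto:
  assumes \<mu>: "\<mu> \<in> borel_prob_measures" and F: "closed F" "F \<noteq> {}"
  shows "(\<lambda>n. integral\<^sup>L \<mu> (indicator_approx F n)) \<longlonglongrightarrow> measure \<mu> F"
proof -
  interpret prob_space \<mu> by (rule prob_space_borel_prob[OF \<mu>])
  have F_sets: "F \<in> sets \<mu>" using sets_borel_prob[OF \<mu>] F(1) by auto
  have "(\<lambda>n. integral\<^sup>L \<mu> (indicator_approx F n)) \<longlonglongrightarrow> integral\<^sup>L \<mu> (indicator F :: _ \<Rightarrow> real)"
  proof (rule integral_dominated_convergence[where w="\<lambda>_. 1"])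
    show "indicator_approx F n \<in> borel_measurable \<mu>" for n
      by (rule measurable_borel_prob[OF \<mu> borel_measurable_continuous_onI[OF continuous_on_indicator_approx]])
    show "AE x in \<mu>. norm (indicator_approx F n x) \<le> 1" for n
      by (intro AE_I2) (simp add: abs_indicator_approx_le)
  qed (use F_sets indicator_approx_tendsto[OF F] in auto)
  then show ?thesis using F_sets by simp
qed

lemma borel_prob_eqI_closed_generator:
  assumes \<mu>: "\<mu> \<in> borel_prob_measures" and \<nu>: "\<nu> \<in> borel_prob_measures"
    and E: "Int_stable E" "\<And>F. F \<in> E \<Longrightarrow> closed F" "UNIV \<in> E" "sets borel = sigma_sets UNIV E"
    and eq: "\<And>F n. F \<in> E \<Longrightarrow> integral\<^sup>L \<mu> (indicator_approx F n) = integral\<^sup>L \<nu> (indicator_approx F n)"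
  shows "\<mu> = \<nu>"
proof (rule measure_eqI_generator_eq_countable[OF E(1), where \<Omega>=UNIV and A="{UNIV}"])
  interpret \<mu>: prob_space \<mu> by (rule prob_space_borel_prob[OF \<mu>])
  interpret \<nu>: prob_space \<nu> by (rule prob_space_borel_prob[OF \<nu>])
  show "sets \<mu> = sigma_sets UNIV E" "sets \<nu> = sigma_sets UNIV E"
    using sets_borel_prob[OF \<mu>] sets_borel_prob[OF \<nu>] E(4) by simp_all
  show "emeasure \<mu> A \<noteq> \<infinity>" if "A \<in> {UNIV}" for A
    using that \<mu>.emeasure_space_1 space_borel_prob[OF \<mu>] by simp
  fix X assume X: "X \<in> E"
  have "measure \<mu> X = measure \<nu> X"
  proof (cases "X = {}")
    case False
    show ?thesis
      using integral_indicator_approx_tendsto[OF \<mu> E(2)[OF X] False]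
        integral_indicator_approx_tendsto[OF \<nu> E(2)[OF X] False] LIMSEQ_unique
      unfolding eq[OF X] by blast
  qed simp
  then show "emeasure \<mu> X = emeasure \<nu> X"
    using \<mu>.emeasure_eq_measure \<nu>.emeasure_eq_measure by simp
qed (use E(3) in auto)

lemma borel_prob_eqI_continuous:
  fixes \<mu> \<nu> :: "'a::metric_space measure"
  assumes "\<mu> \<in> borel_prob_measures" "\<nu> \<in> borel_prob_measures"
    and "\<And>g :: 'a \<Rightarrow> real. continuous_on UNIV g \<Longrightarrow> integral\<^sup>L \<mu> g = integral\<^sup>L \<nu> g"
  shows "\<mu> = \<nu>"
proof (rule borel_prob_eqI_closed_generator[OF assms(1,2), where E="Collect closed"])
  show "sets borel = sigma_sets UNIV (Collect closed)"
    by (metis borel_eq_closed sets_measure_of top_greatest Pow_UNIV)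
qed (auto simp: Int_stable_def intro: assms(3) continuous_on_indicator_approx)

lemma compact_metric_countable_dense:
  assumes "compact (UNIV :: 'a::metric_space set)"
  obtains D :: "'a::metric_space set" where "countable D" "\<And>x r. 0 < r \<Longrightarrow> \<exists>d\<in>D. dist x d < r"
proof -
  have "\<forall>k. \<exists>(n::nat) e. 0 < n \<and> (\<forall>z. \<exists>i<n. dist z (e i :: 'a) \<le> (1/2)^k)"
    using compact_metric_finite_net[OF assms] by simp
  then obtain e :: "nat \<Rightarrow> nat \<Rightarrow> 'a" where e: "\<And>k z. \<exists>i. dist z (e k i) \<le> (1/2)^k"
    by metis
  show ?thesis
  proof (rule that[of "range (case_prod e)"])
    fix x and r :: real assume "0 < r"
    then obtain k where "(1/2::real)^k < r" using real_arch_pow_inv[of r "1/2"] by auto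
    moreover obtain i where "dist x (e k i) \<le> (1/2)^k" using e by blast
    ultimately have "dist x (case_prod e (k, i)) < r" by simp
    then show "\<exists>d\<in>range (case_prod e). dist x d < r" by blast
  qed simp
qed

lemma compact_metric_countable_closed_basis:
  assumes "compact (UNIV :: 'a::metric_space set)"
  obtains B :: "'a::metric_space set set"
  where "countable B" "\<And>b. b \<in> B \<Longrightarrow> closed b" "\<And>S. open S \<Longrightarrow> S = \<Union> {b\<in>B. b \<subseteq> S}"
proof -
  obtain D :: "'a set" where D: "countable D" "\<And>x r. 0 < r \<Longrightarrow> \<exists>d\<in>D. dist x d < r"
    using compact_metric_countable_dense[OF assms] by blast
  define B where "B = (\<lambda>(d, q). cball d q) ` (D \<times> {q \<in> \<rat>. 0 < q})"
  have "countable B"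
    unfolding B_def using D(1) countable_rat
    by (intro countable_image countable_SIGMA) (auto intro: countable_subset[of _ \<rat>])
  moreover have "closed b" if "b \<in> B" for b using that unfolding B_def by auto
  moreover have "S = \<Union> {b\<in>B. b \<subseteq> S}" if "open S" for S
  proof (intro equalityI subsetI)
    fix x assume "x \<in> S"
    then obtain r where r: "0 < r" "ball x r \<subseteq> S" using \<open>open S\<close> open_contains_ball by blast
    obtain q where q: "q \<in> \<rat>" "0 < q" "q < r/2" using Rats_dense_in_real[of 0 "r/2"] r(1) by auto
    obtain d where d: "d \<in> D" "dist x d < q" using D(2)[OF q(2)] by blast
    have "cball d q \<subseteq> S"
    proof
      fix y assume "y \<in> cball d q"
      then have "dist x y < r" using d(2) q(3) dist_triangle[of x y d] by simp
      then show "y \<in> S" using r(2) by auto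
    qed
    moreover have "cball d q \<in> B" unfolding B_def using d(1) q(1,2) by auto
    moreover have "x \<in> cball d q" using d(2) by (simp add: dist_commute)
    ultimately show "x \<in> \<Union> {b\<in>B. b \<subseteq> S}" by blast
  qed auto
  ultimately show ?thesis using that by blast
qed

lemma compact_metric_countable_closed_generator:
  assumes "compact (UNIV :: 'a::metric_space set)"
  obtains E :: "'a::metric_space set set"
  where "countable E" "Int_stable E" "\<And>F. F \<in> E \<Longrightarrow> closed F" "UNIV \<in> E"
    "sets borel = sigma_sets UNIV E"
proof -
  obtain B :: "'a set set" where B: "countable B" "\<And>b. b \<in> B \<Longrightarrow> closed b"
    and open_Union: "\<And>S. open S \<Longrightarrow> S = \<Union> {b\<in>B. b \<subseteq> S}"
    using compact_metric_countable_closed_basis[OF assms] by blast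
  define E where "E = (\<lambda>L. \<Inter> (set L)) ` lists B"
  have "countable E" unfolding E_def using B(1) by simp
  have B_E: "B \<subseteq> E" unfolding E_def by (auto intro!: image_eqI[where x="[_]"])
  have "Int_stable E"
  proof (rule Int_stableI)
    fix a b assume "a \<in> E" "b \<in> E"
    then obtain L M where "L \<in> lists B" "M \<in> lists B" "a = \<Inter> (set L)" "b = \<Inter> (set M)"
      unfolding E_def by auto
    then show "a \<inter> b \<in> E" unfolding E_def by (intro image_eqI[of _ _ "L @ M"]) auto
  qed
  have closed_E: "closed F" if "F \<in> E" for F using that B(2) unfolding E_def by auto
  have "UNIV \<in> E" unfolding E_def by (auto intro!: image_eqI[where x="[]"])
  have "sets borel = sigma_sets UNIV E"
  proof
    show "sigma_sets UNIV E \<subseteq> sets borel"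
      using closed_E by (intro sets.sigma_sets_subset[of E borel, simplified]) auto
    have "S \<in> sigma_sets UNIV E" if "open S" for S
    proof -
      have "\<Union> {b\<in>B. b \<subseteq> S} \<in> sigma_sets UNIV E"
        using B(1) B_E
        by (intro sigma_algebra.countable_Union[OF sigma_algebra_sigma_sets])
           (auto intro: countable_subset)
      then show ?thesis using open_Union[OF that] by simp
    qed
    then show "sets borel \<subseteq> sigma_sets UNIV E"
      unfolding sets_borel by (intro sigma_algebra.sigma_sets_subset[OF sigma_algebra_sigma_sets]) auto
  qed
  then show ?thesis using that \<open>countable E\<close> \<open>Int_stable E\<close> closed_E \<open>UNIV \<in> E\<close> by blast
qed

lemma compact_metric_countable_determining:
  assumes "compact (UNIV :: 'a::metric_space set)"
  obtains D :: "nat \<Rightarrow> 'a::metric_space \<Rightarrow> real"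
  where "\<And>k. continuous_on UNIV (D k)"
    "\<And>\<mu> \<nu>. \<mu> \<in> borel_prob_measures \<Longrightarrow> \<nu> \<in> borel_prob_measures \<Longrightarrow>
      (\<And>k. integral\<^sup>L \<mu> (D k) = integral\<^sup>L \<nu> (D k)) \<Longrightarrow> \<mu> = \<nu>"
proof -
  obtain E :: "'a set set" where E: "countable E" "Int_stable E" "\<And>F. F \<in> E \<Longrightarrow> closed F"
    "UNIV \<in> E" "sets borel = sigma_sets UNIV E"
    using compact_metric_countable_closed_generator[OF assms] by blast
  define h where "h = from_nat_into (E \<times> (UNIV :: nat set))"
  have h: "range h = E \<times> UNIV"
    unfolding h_def using E(1,4) by (intro range_from_nat_into) auto
  show ?thesis
  proof (rule that[of "\<lambda>k. indicator_approx (fst (h k)) (snd (h k))"])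
    fix \<mu> \<nu> :: "'a measure"
    assume \<mu>: "\<mu> \<in> borel_prob_measures" and \<nu>: "\<nu> \<in> borel_prob_measures"
      and eq: "\<And>k. integral\<^sup>L \<mu> (indicator_approx (fst (h k)) (snd (h k))) =
        integral\<^sup>L \<nu> (indicator_approx (fst (h k)) (snd (h k)))"
    show "\<mu> = \<nu>"
    proof (rule borel_prob_eqI_closed_generator[OF \<mu> \<nu> E(2,3,4,5)])
      fix F n assume "F \<in> E"
      then obtain k where "h k = (F, n)" using h by (metis SigmaI UNIV_I rangeE)
      then show "integral\<^sup>L \<mu> (indicator_approx F n) = integral\<^sup>L \<nu> (indicator_approx F n)"
        using eq[of k] by simp
    qed
  qed (rule continuous_on_indicator_approx)
qed

lemma weak_star_subbasis_integral:
  fixes g :: "'a::topological_space \<Rightarrow> real"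
  assumes "continuous_on UNIV g" "open V"
  shows "openin weak_star_topology {\<mu> \<in> borel_prob_measures. integral\<^sup>L \<mu> g \<in> V}"
  unfolding weak_star_topology_def openin_topology_generated_by_iff
  using assms by (intro generate_topology_on.Basis) blast

lemma topspace_weak_star: "topspace weak_star_topology = borel_prob_measures"
proof -
  have "openin weak_star_topology {\<mu> \<in> borel_prob_measures. integral\<^sup>L \<mu> (\<lambda>_::'a. 0::real) \<in> UNIV}"
    by (rule weak_star_subbasis_integral) auto
  then have "borel_prob_measures \<subseteq> topspace (weak_star_topology :: 'a measure topology)"
    by (auto dest: openin_subset)
  moreover have "topspace (weak_star_topology :: 'a measure topology) \<subseteq> borel_prob_measures"
    unfolding weak_star_topology_def by auto
  ultimately show ?thesis by blast
qed

lemma openin_weak_star_integrals_near: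
  fixes D :: "nat \<Rightarrow> 'a::topological_space \<Rightarrow> real"
  assumes "\<And>k. continuous_on UNIV (D k)"
  shows "openin weak_star_topology
    {\<mu> \<in> borel_prob_measures. \<forall>k<n. integral\<^sup>L \<mu> (D k) \<in> ball (c k) r}"
proof (induction n)
  case 0
  then show ?case using openin_topspace[of weak_star_topology] by (simp add: topspace_weak_star)
next
  case (Suc n)
  have "{\<mu> \<in> borel_prob_measures. \<forall>k<Suc n. integral\<^sup>L \<mu> (D k) \<in> ball (c k) r} =
      {\<mu> \<in> borel_prob_measures. \<forall>k<n. integral\<^sup>L \<mu> (D k) \<in> ball (c k) r} \<inter>
      {\<mu> \<in> borel_prob_measures. integral\<^sup>L \<mu> (D n) \<in> ball (c n) r}"
    by (auto simp: less_Suc_eq)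
  then show ?case
    using Suc weak_star_subbasis_integral[OF assms open_ball] by (simp add: openin_Int)
qed

lemma LIMSEQ_dist_less_inverse_Suc:
  fixes x :: "nat \<Rightarrow> 'a::metric_space"
  assumes "\<And>n. k < n \<Longrightarrow> dist (x n) c < 1 / Suc n"
  shows "x \<longlonglongrightarrow> c"
proof (rule metric_LIMSEQ_I)
  fix r :: real assume "0 < r"
  then obtain n0 where n0: "1 / Suc n0 < r" using nat_approx_posE by blast
  have "dist (x n) c < r" if "max n0 (Suc k) \<le> n" for n
  proof -
    have "1 / real (Suc n) \<le> 1 / Suc n0" using that by (simp add: frac_le)
    then show ?thesis using assms[of n] that n0 by simp
  qed
  then show "\<exists>n0. \<forall>n\<ge>n0. dist (x n) c < r" by blast
qed

text \<open>A substitute for first countability of the weak* topology: W n controls the integrals of the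
  first n functions of a countable determining family.\<close>
lemma weak_star_shrinking_nhds:
  fixes \<nu> :: "'a::metric_space measure"
  assumes cpt: "compact (UNIV :: 'a set)" and \<nu>: "\<nu> \<in> borel_prob_measures"
  obtains W :: "nat \<Rightarrow> 'a measure set"
  where "\<And>n. openin weak_star_topology (W n)" "\<And>n. \<nu> \<in> W n" "\<And>m n. m \<le> n \<Longrightarrow> W n \<subseteq> W m"
    "\<And>\<mu>s \<mu>. (\<And>n. \<mu>s n \<in> W n) \<Longrightarrow> \<mu> \<in> borel_prob_measures \<Longrightarrow> weak_star_conv \<mu>s \<mu> \<Longrightarrow> \<mu> = \<nu>"
proof -
  obtain D :: "nat \<Rightarrow> 'a \<Rightarrow> real" where D: "\<And>k. continuous_on UNIV (D k)"
    and D_determining: "\<And>\<mu> \<mu>'. \<mu> \<in> borel_prob_measures \<Longrightarrow> \<mu>' \<in> borel_prob_measures \<Longrightarrow>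
      (\<And>k. integral\<^sup>L \<mu> (D k) = integral\<^sup>L \<mu>' (D k)) \<Longrightarrow> \<mu> = \<mu>'"
    using compact_metric_countable_determining[OF cpt] by blast
  define W where "W n = {\<mu> \<in> borel_prob_measures.
    \<forall>k<n. integral\<^sup>L \<mu> (D k) \<in> ball (integral\<^sup>L \<nu> (D k)) (1 / Suc n)}" for n
  show ?thesis
  proof (rule that)
    show "openin weak_star_topology (W n)" for n
      unfolding W_def by (rule openin_weak_star_integrals_near[OF D])
    show "\<nu> \<in> W n" for n unfolding W_def using \<nu> by simp
    show "W n \<subseteq> W m" if "m \<le> n" for m n
    proof -
      have "1 / real (Suc n) \<le> 1 / Suc m" using that by (simp add: frac_le)
      then show ?thesis unfolding W_def using that
        by (auto simp: dist_commute) (meson order_less_le_trans less_le_trans)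
    qed
    fix \<mu>s \<mu> assume \<mu>s: "\<And>n. \<mu>s n \<in> W n" and \<mu>: "\<mu> \<in> borel_prob_measures"
      and conv: "weak_star_conv \<mu>s \<mu>"
    show "\<mu> = \<nu>"
    proof (rule D_determining[OF \<mu> \<nu>])
      fix k
      have "(\<lambda>n. integral\<^sup>L (\<mu>s n) (D k)) \<longlonglongrightarrow> integral\<^sup>L \<nu> (D k)"
        using \<mu>s unfolding W_def by (intro LIMSEQ_dist_less_inverse_Suc[of k]) (auto simp: dist_commute)
      then show "integral\<^sup>L \<mu> (D k) = integral\<^sup>L \<nu> (D k)"
        using LIMSEQ_unique weak_star_convD[OF conv D] by blast
    qed
  qed
qed

section \<open>Finite mixtures\<close>

text \<open>The mixture of the first n measures with weights w, written as a bind over the finite index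
  set so that its sets, measure and nonnegative integral come from the Giry monad.\<close>
definition mixture :: "(nat \<Rightarrow> real) \<Rightarrow> (nat \<Rightarrow> 'a::topological_space measure) \<Rightarrow> nat \<Rightarrow> 'a measure" where
  "mixture w \<mu>s n = count_space {..<n} \<bind> (\<lambda>i. scale_measure (ennreal (w i)) (\<mu>s i))"

locale finite_mixture =
  fixes w :: "nat \<Rightarrow> real" and \<mu>s :: "nat \<Rightarrow> 'a::topological_space measure" and n :: nat
  assumes borel_prob: "\<And>i. i < n \<Longrightarrow> \<mu>s i \<in> borel_prob_measures"
    and weight: "\<And>i. i < n \<Longrightarrow> 0 \<le> w i \<and> w i \<le> 1" and nonempty: "0 < n"
begin

lemma measurable_components:
  "(\<lambda>i. scale_measure (ennreal (w i)) (\<mu>s i)) \<in> measurable (count_space {..<n}) (subprob_algebra borel)"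
proof -
  have "subprob_space (scale_measure (ennreal (w i)) (\<mu>s i))" if i: "i < n" for i
  proof (rule subprob_spaceI)
    interpret prob_space "\<mu>s i" by (rule prob_space_borel_prob[OF borel_prob[OF i]])
    show "emeasure (scale_measure (ennreal (w i)) (\<mu>s i)) (space (scale_measure (ennreal (w i)) (\<mu>s i))) \<le> 1"
      using weight[OF i] by (simp add: space_scale_measure emeasure_space_1 ennreal_le_1)
    show "space (scale_measure (ennreal (w i)) (\<mu>s i)) \<noteq> {}"
      by (simp add: space_scale_measure space_borel_prob[OF borel_prob[OF i]])
  qed
  then show ?thesis by (auto simp: space_subprob_algebra sets_borel_prob[OF borel_prob])
qed

lemma sets_mixture: "sets (mixture w \<mu>s n) = sets borel"
  unfolding mixture_def using nonempty
  by (subst sets_bind[where N=borel]) (auto simp: sets_borel_prob[OF borel_prob])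

lemma space_mixture: "space (mixture w \<mu>s n) = UNIV"
  using sets_eq_imp_space_eq[OF sets_mixture] by simp

lemma emeasure_mixture:
  "X \<in> sets borel \<Longrightarrow> emeasure (mixture w \<mu>s n) X = (\<Sum>i<n. ennreal (w i) * emeasure (\<mu>s i) X)"
  unfolding mixture_def using nonempty
  by (subst emeasure_bind[OF _ measurable_components])
     (auto simp: nn_integral_count_space_finite sets_borel_prob[OF borel_prob])

lemma nn_integral_mixture:
  assumes "f \<in> borel_measurable borel"
  shows "(\<integral>\<^sup>+x. f x \<partial>mixture w \<mu>s n) = (\<Sum>i<n. ennreal (w i) * (\<integral>\<^sup>+x. f x \<partial>\<mu>s i))"
proof -
  have "(\<integral>\<^sup>+x. f x \<partial>mixture w \<mu>s n) =
      (\<Sum>i<n. \<integral>\<^sup>+x. f x \<partial>scale_measure (ennreal (w i)) (\<mu>s i))"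
    unfolding mixture_def nn_integral_bind[OF assms measurable_components]
    by (simp add: nn_integral_count_space_finite)
  also have "\<dots> = (\<Sum>i<n. ennreal (w i) * (\<integral>\<^sup>+x. f x \<partial>\<mu>s i))"
    using measurable_borel_prob[OF borel_prob assms] by (intro sum.cong refl nn_integral_scale_measure) auto
  finally show ?thesis .
qed

lemma integral_mixture:
  fixes g :: "'a \<Rightarrow> real"
  assumes g[measurable]: "g \<in> borel_measurable borel" and B: "\<And>x. \<bar>g x\<bar> \<le> B"
  shows "integral\<^sup>L (mixture w \<mu>s n) g = (\<Sum>i<n. w i * integral\<^sup>L (\<mu>s i) g)"
proof -
  have g_mixture: "g \<in> borel_measurable (mixture w \<mu>s n)"
    using measurable_cong_sets[OF sets_mixture refl] g by blast
  have nn_finite: "ennreal (w i) * (\<integral>\<^sup>+x. ennreal (h x) \<partial>\<mu>s i) < \<infinity>"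
    if "i < n" "\<And>x. h x \<le> B" for i and h :: "'a \<Rightarrow> real"
  proof -
    interpret prob_space "\<mu>s i" by (rule prob_space_borel_prob[OF borel_prob[OF that(1)]])
    have "(\<integral>\<^sup>+x. ennreal (h x) \<partial>\<mu>s i) \<le> (\<integral>\<^sup>+x. ennreal B \<partial>\<mu>s i)"
      using that(2) by (intro nn_integral_mono ennreal_leI) auto
    then show ?thesis
      by (simp add: emeasure_space_1 ennreal_mult_less_top top.not_eq_extremum order_le_less_trans)
  qed
  have enn2real_mixture: "enn2real (\<integral>\<^sup>+x. ennreal (h x) \<partial>mixture w \<mu>s n) =
      (\<Sum>i<n. w i * enn2real (\<integral>\<^sup>+x. ennreal (h x) \<partial>\<mu>s i))"
    if [measurable]: "h \<in> borel_measurable borel" and "\<And>x. h x \<le> B" for h :: "'a \<Rightarrow> real"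
  proof -
    have "enn2real (\<integral>\<^sup>+x. ennreal (h x) \<partial>mixture w \<mu>s n) =
        (\<Sum>i<n. enn2real (ennreal (w i) * (\<integral>\<^sup>+x. ennreal (h x) \<partial>\<mu>s i)))"
      unfolding nn_integral_mixture[OF measurable_compose[OF that(1) measurable_ennreal]]
      using nn_finite[of _ h] that(2) by (subst enn2real_sum) auto
    also have "\<dots> = (\<Sum>i<n. w i * enn2real (\<integral>\<^sup>+x. ennreal (h x) \<partial>\<mu>s i))"
      using weight by (intro sum.cong refl) (simp add: enn2real_mult)
    finally show ?thesis .
  qed
  have "integrable (mixture w \<mu>s n) g"
  proof (rule integrableI_bounded[OF g_mixture])
    have "(\<integral>\<^sup>+x. ennreal (norm (g x)) \<partial>mixture w \<mu>s n) =
        (\<Sum>i<n. ennreal (w i) * (\<integral>\<^sup>+x. ennreal \<bar>g x\<bar> \<partial>\<mu>s i))"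
      by (simp add: nn_integral_mixture)
    also have "\<dots> < \<infinity>" using nn_finite[of _ "\<lambda>x. \<bar>g x\<bar>"] B by (simp add: ennreal_sum_less_top)
    finally show "(\<integral>\<^sup>+x. ennreal (norm (g x)) \<partial>mixture w \<mu>s n) < \<infinity>" .
  qed
  moreover have "integrable (\<mu>s i) g" if "i < n" for i
    using integrable_borel_prob_bounded[OF borel_prob[OF that] g B] .
  ultimately show ?thesis
    using enn2real_mixture[of g] enn2real_mixture[of "\<lambda>x. - g x"] B
    by (simp add: real_lebesgue_integral_def abs_le_iff sum_subtractf right_diff_distrib)
qed

lemma mixture_borel_prob:
  assumes "(\<Sum>i<n. w i) = 1"
  shows "mixture w \<mu>s n \<in> borel_prob_measures"
proof -
  have "emeasure (mixture w \<mu>s n) (space (mixture w \<mu>s n)) = (\<Sum>i<n. ennreal (w i))"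
    using prob_space.emeasure_space_1[OF prob_space_borel_prob[OF borel_prob]]
      space_borel_prob[OF borel_prob]
    by (simp add: space_mixture emeasure_mixture)
  also have "\<dots> = 1" using weight assms by (subst sum_ennreal) auto
  finally have "prob_space (mixture w \<mu>s n)" by (rule prob_spaceI)
  then show ?thesis unfolding borel_prob_measures_def using sets_mixture by auto
qed

lemma distr_mixture:
  assumes f: "f \<in> borel_measurable borel"
  shows "distr (mixture w \<mu>s n) borel f = mixture w (\<lambda>i. distr (\<mu>s i) borel f) n"
proof -
  interpret distr: finite_mixture w "\<lambda>i. distr (\<mu>s i) borel f" n
    using weight nonempty distr_borel_prob[OF borel_prob f] by unfold_locales auto
  show ?thesis
  proof (rule measure_eqI)
    fix A assume "A \<in> sets (distr (mixture w \<mu>s n) borel f)"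
    then have A: "A \<in> sets borel" by simp
    have f_mixture: "f \<in> measurable (mixture w \<mu>s n) borel"
      using measurable_cong_sets[OF sets_mixture refl] f by blast
    have "f -` A \<in> sets borel" using measurable_sets[OF f A] by simp
    then have "emeasure (distr (mixture w \<mu>s n) borel f) A = (\<Sum>i<n. ennreal (w i) * emeasure (\<mu>s i) (f -` A))"
      by (simp add: emeasure_distr[OF f_mixture A] space_mixture emeasure_mixture)
    also have "\<dots> = (\<Sum>i<n. ennreal (w i) * emeasure (distr (\<mu>s i) borel f) A)"
      using A space_borel_prob[OF borel_prob]
      by (intro sum.cong refl) (simp add: emeasure_distr[OF measurable_borel_prob[OF borel_prob f]])
    finally show "emeasure (distr (mixture w \<mu>s n) borel f) A =
        emeasure (mixture w (\<lambda>i. distr (\<mu>s i) borel f) n) A"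
      using A by (simp add: distr.emeasure_mixture)
  qed (simp add: distr.sets_mixture)
qed

end

lemma mix_measure_eq_mixture:
  fixes \<mu> \<nu> :: "'a::topological_space measure"
  assumes \<mu>: "\<mu> \<in> borel_prob_measures" and \<nu>: "\<nu> \<in> borel_prob_measures" and t: "0 \<le> t" "t \<le> 1"
  shows "mix_measure t \<mu> \<nu> = mixture (\<lambda>i. if i = 0 then t else 1 - t) (\<lambda>i. if i = 0 then \<mu> else \<nu>) 2"
proof -
  interpret finite_mixture "\<lambda>i. if i = 0 then t else 1 - t" "\<lambda>i. if i = 0 then \<mu> else \<nu>" 2
    using \<mu> \<nu> t by unfold_locales auto
  have sets: "sets (mix_measure t \<mu> \<nu>) = sets borel"
    unfolding mix_measure_def sets_measure_of[OF sets.space_closed] sets.sigma_sets_eq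
    by (rule sets_borel_prob[OF \<mu>])
  show ?thesis
  proof (rule measure_eqI)
    fix A assume "A \<in> sets (mix_measure t \<mu> \<nu>)"
    then have A: "A \<in> sets borel" using sets by simp
    have "emeasure (mix_measure t \<mu> \<nu>) A = ennreal t * emeasure \<mu> A + ennreal (1 - t) * emeasure \<nu> A"
    proof (rule emeasure_measure_of[OF mix_measure_def])
      show "countably_additive (sets (mix_measure t \<mu> \<nu>))
          (\<lambda>A. ennreal t * emeasure \<mu> A + ennreal (1 - t) * emeasure \<nu> A)"
        unfolding countably_additive_def sets
      proof (intro allI impI)
        fix F :: "nat \<Rightarrow> 'a set"
        assume F: "range F \<subseteq> sets borel" "disjoint_family F"
        then have "(\<Sum>i. emeasure \<mu> (F i)) = emeasure \<mu> (\<Union>i. F i)" "(\<Sum>i. emeasure \<nu> (F i)) = emeasure \<nu> (\<Union>i. F i)"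
          using suminf_emeasure[of F \<mu>] suminf_emeasure[of F \<nu>] sets_borel_prob[OF \<mu>]
            sets_borel_prob[OF \<nu>] by simp_all
        then show "(\<Sum>i. ennreal t * emeasure \<mu> (F i) + ennreal (1 - t) * emeasure \<nu> (F i)) =
            ennreal t * emeasure \<mu> (\<Union> (range F)) + ennreal (1 - t) * emeasure \<nu> (\<Union> (range F))"
          by (simp add: suminf_add[symmetric] ennreal_suminf_cmult)
      qed
    qed (use A sets in \<open>auto simp: positive_def sets.space_closed\<close>)
    then show "emeasure (mix_measure t \<mu> \<nu>) A =
        emeasure (mixture (\<lambda>i. if i = 0 then t else 1 - t) (\<lambda>i. if i = 0 then \<mu> else \<nu>) 2) A"
      unfolding emeasure_mixture[OF A] by (simp add: numeral_2_eq_2)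
  qed (simp add: sets sets_mixture)
qed

context
  fixes t :: real and \<mu> \<nu> :: "'a::topological_space measure"
  assumes \<mu>: "\<mu> \<in> borel_prob_measures" and \<nu>: "\<nu> \<in> borel_prob_measures" and t: "0 \<le> t" "t \<le> 1"
begin

interpretation binary: finite_mixture "\<lambda>i. if i = 0 then t else 1 - t" "\<lambda>i. if i = 0 then \<mu> else \<nu>" 2
  using \<mu> \<nu> t by unfold_locales auto

lemma mix_measure_borel_prob: "mix_measure t \<mu> \<nu> \<in> borel_prob_measures"
  unfolding mix_measure_eq_mixture[OF \<mu> \<nu> t] by (rule binary.mixture_borel_prob) (simp add: numeral_2_eq_2)

lemma integral_mix_measure:
  fixes g :: "'a \<Rightarrow> real"
  assumes "g \<in> borel_measurable borel" "\<And>x. \<bar>g x\<bar> \<le> B"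
  shows "integral\<^sup>L (mix_measure t \<mu> \<nu>) g = t * integral\<^sup>L \<mu> g + (1 - t) * integral\<^sup>L \<nu> g"
  unfolding mix_measure_eq_mixture[OF \<mu> \<nu> t] binary.integral_mixture[OF assms]
  by (simp add: numeral_2_eq_2)

lemma distr_mix_measure:
  assumes f: "f \<in> borel_measurable borel"
  shows "distr (mix_measure t \<mu> \<nu>) borel f = mix_measure t (distr \<mu> borel f) (distr \<nu> borel f)"
  unfolding mix_measure_eq_mixture[OF \<mu> \<nu> t] binary.distr_mixture[OF f]
    mix_measure_eq_mixture[OF distr_borel_prob[OF \<mu> f] distr_borel_prob[OF \<nu> f] t]
  by (rule arg_cong[where f="\<lambda>ms. mixture _ ms 2"]) auto

end

section \<open>Invariant lifts\<close>

lemma invariant_measuresD: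
  assumes "\<nu> \<in> invariant_measures S"
  shows "\<nu> \<in> borel_prob_measures" "distr \<nu> borel S = \<nu>"
  using assms unfolding invariant_measures_def by auto

lemma measurable_funpow: "f \<in> measurable M M \<Longrightarrow> f ^^ n \<in> measurable M M"
  by (induction n) (auto simp: measurable_ident)

lemma funpow_semiconj:
  assumes "S \<circ> p = p \<circ> U" shows "p ((U ^^ k) z) = (S ^^ k) (p z)"
proof (induction k)
  case (Suc k)
  then show ?case using fun_cong[OF assms, of "(U ^^ k) z"] by simp
qed simp

lemma distr_funpow_invariant:
  assumes \<nu>: "\<nu> \<in> invariant_measures S" and S: "S \<in> borel_measurable borel"
  shows "distr \<nu> borel (S ^^ k) = \<nu>"
proof (induction k)
  case 0
  show ?case using distr_id2[OF sets_borel_prob[OF invariant_measuresD(1)[OF \<nu>], symmetric]] by simp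
next
  case (Suc k)
  have "distr \<nu> borel (S ^^ Suc k) = distr (distr \<nu> borel (S ^^ k)) borel S"
    using distr_distr[OF S measurable_borel_prob[OF invariant_measuresD(1)[OF \<nu>] measurable_funpow[OF S]]]
    by simp
  then show ?case using Suc invariant_measuresD(2)[OF \<nu>] by (simp del: funpow.simps)
qed

text \<open>The section picks the least code in each fibre; its sublevel sets are continuous images of
  compact sets of codes, hence Borel.\<close>
lemma continuous_surj_borel_section:
  fixes p :: "'z::metric_space \<Rightarrow> 'y::metric_space"
  assumes cpt: "compact (UNIV :: 'z set)" and p: "continuous_on UNIV p" "surj p"
  obtains s where "s \<in> borel_measurable borel" "\<And>y. p (s y) = y"
proof -
  obtain K and R :: "real \<Rightarrow> 'z" and c where K: "compact K"
    and R: "continuous_on K R" and R_borel[measurable]: "R \<in> borel_measurable borel"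
    and "c \<in> borel_measurable borel" and cK: "\<And>z. c z \<in> K" and Rc: "\<And>z. R (c z) = z"
    using compact_metric_coding[OF cpt] by blast
  have pR: "continuous_on K (\<lambda>x. p (R x))" by (rule continuous_on_compose2[OF p(1) R]) auto
  define A where "A y = K \<inter> (\<lambda>x. p (R x)) -` {y}" for y
  have A_closed: "closed (A y)" for y
    unfolding A_def by (rule continuous_closed_preimage[OF pR compact_imp_closed[OF K]]) simp
  have A_nonempty: "A y \<noteq> {}" for y
  proof -
    obtain z where "p z = y" using p(2) by (metis surjD)
    then have "c z \<in> A y" unfolding A_def using cK Rc by auto
    then show ?thesis by auto
  qed
  have A_bdd: "bdd_below (A y)" for y
    unfolding A_def using bounded_imp_bdd_below[OF compact_imp_bounded[OF K]] by (auto intro: bdd_below_mono)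
  define t where "t y = Inf (A y)" for y
  have t_A: "t y \<in> A y" for y unfolding t_def by (rule closed_contains_Inf[OF A_nonempty A_bdd A_closed])
  have t_le_iff: "t y \<le> a \<longleftrightarrow> (\<exists>x\<in>A y. x \<le> a)" for y a
  proof
    assume "\<exists>x\<in>A y. x \<le> a"
    then obtain x where "x \<in> A y" "x \<le> a" by blast
    then show "t y \<le> a" unfolding t_def using cInf_lower[OF _ A_bdd] order_trans by blast
  qed (use t_A in blast)
  have "t \<in> borel_measurable borel"
    unfolding borel_measurable_iff_le
  proof
    fix a
    have "{y \<in> space borel. t y \<le> a} = (\<lambda>x. p (R x)) ` (K \<inter> {..a})"
      unfolding t_le_iff A_def by auto
    moreover have "compact ((\<lambda>x. p (R x)) ` (K \<inter> {..a}))"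
      by (intro compact_continuous_image continuous_on_subset[OF pR] compact_Int_closed K) auto
    ultimately show "{y \<in> space borel. t y \<le> a} \<in> sets borel"
      by (simp add: compact_imp_closed borel_closed)
  qed
  moreover have "p (R (t y)) = y" for y using t_A[of y] unfolding A_def by auto
  ultimately show ?thesis using that[of "\<lambda>y. R (t y)"] by simp
qed

lemma weak_star_conv_distr:
  fixes p :: "'a::topological_space \<Rightarrow> 'b::topological_space"
  assumes p: "continuous_on UNIV p" and \<mu>s: "\<And>n. \<mu>s n \<in> borel_prob_measures"
    and \<mu>: "\<mu> \<in> borel_prob_measures" and conv: "weak_star_conv \<mu>s \<mu>"
  shows "weak_star_conv (\<lambda>n. distr (\<mu>s n) borel p) (distr \<mu> borel p)"
  unfolding weak_star_conv_def
proof (intro allI impI)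
  fix g :: "'b \<Rightarrow> real" assume g: "continuous_on UNIV g"
  have [measurable]: "p \<in> borel_measurable borel" "g \<in> borel_measurable borel"
    using p g by (auto intro: borel_measurable_continuous_onI)
  have "continuous_on UNIV (\<lambda>x. g (p x))" by (rule continuous_on_compose2[OF g p]) auto
  from weak_star_convD[OF conv this] show "(\<lambda>n. integral\<^sup>L (distr (\<mu>s n) borel p) g) \<longlonglongrightarrow> integral\<^sup>L (distr \<mu> borel p) g"
    by (simp add: integral_distr_borel_prob[OF \<mu>s] integral_distr_borel_prob[OF \<mu>])
qed

lemma invariant_of_weak_star_limit:
  fixes U :: "'a::metric_space \<Rightarrow> 'a"
  assumes U: "continuous_on UNIV U" and \<mu>: "\<mu> \<in> borel_prob_measures" and conv: "weak_star_conv \<mu>s \<mu>"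
    and asymp_inv: "\<And>g :: 'a \<Rightarrow> real. continuous_on UNIV g \<Longrightarrow>
      (\<lambda>n. (\<integral>x. g (U x) \<partial>\<mu>s n) - integral\<^sup>L (\<mu>s n) g) \<longlonglongrightarrow> 0"
  shows "\<mu> \<in> invariant_measures U"
proof -
  have U_borel: "U \<in> borel_measurable borel" by (rule borel_measurable_continuous_onI[OF U])
  have "distr \<mu> borel U = \<mu>"
  proof (rule borel_prob_eqI_continuous[OF distr_borel_prob[OF \<mu> U_borel] \<mu>])
    fix g :: "'a \<Rightarrow> real" assume g: "continuous_on UNIV g"
    have gU: "continuous_on UNIV (\<lambda>x. g (U x))" by (rule continuous_on_compose2[OF g U]) auto
    have "(\<lambda>n. ((\<integral>x. g (U x) \<partial>\<mu>s n) - integral\<^sup>L (\<mu>s n) g) + integral\<^sup>L (\<mu>s n) g)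
        \<longlonglongrightarrow> 0 + integral\<^sup>L \<mu> g"
      by (intro tendsto_add asymp_inv[OF g] weak_star_convD[OF conv g])
    then have "(\<lambda>n. \<integral>x. g (U x) \<partial>\<mu>s n) \<longlonglongrightarrow> integral\<^sup>L \<mu> g" by simp
    then have "(\<integral>x. g (U x) \<partial>\<mu>) = integral\<^sup>L \<mu> g"
      using LIMSEQ_unique weak_star_convD[OF conv gU] by blast
    then show "integral\<^sup>L (distr \<mu> borel U) g = integral\<^sup>L \<mu> g"
      by (simp add: integral_distr_borel_prob[OF \<mu> U_borel borel_measurable_continuous_onI[OF g]])
  qed
  then show ?thesis unfolding invariant_measures_def using \<mu> by simp
qed

lemma invariant_measures_weak_star_closed:
  fixes U :: "'a::metric_space \<Rightarrow> 'a"
  assumes U: "continuous_on UNIV U" and \<mu>s: "\<And>n. \<mu>s n \<in> invariant_measures U"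
    and \<mu>: "\<mu> \<in> borel_prob_measures" and conv: "weak_star_conv \<mu>s \<mu>"
  shows "\<mu> \<in> invariant_measures U"
proof (rule invariant_of_weak_star_limit[OF U \<mu> conv])
  fix g :: "'a \<Rightarrow> real" assume "continuous_on UNIV g"
  then have "(\<integral>x. g (U x) \<partial>\<mu>s n) = integral\<^sup>L (\<mu>s n) g" for n
    using integral_distr_borel_prob[OF invariant_measuresD(1)[OF \<mu>s]
        borel_measurable_continuous_onI[OF U] borel_measurable_continuous_onI, of g n]
      invariant_measuresD(2)[OF \<mu>s] by simp
  then show "(\<lambda>n. (\<integral>x. g (U x) \<partial>\<mu>s n) - integral\<^sup>L (\<mu>s n) g) \<longlonglongrightarrow> 0" by simp
qed

definition orbit_average :: "('a::topological_space \<Rightarrow> 'a) \<Rightarrow> 'a measure \<Rightarrow> nat \<Rightarrow> 'a measure" where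
  "orbit_average U \<mu> N = mixture (\<lambda>_. 1 / Suc N) (\<lambda>k. distr \<mu> borel (U ^^ k)) (Suc N)"

lemma finite_mixture_orbit_average:
  fixes U :: "'a::topological_space \<Rightarrow> 'a"
  assumes "U \<in> borel_measurable borel" "\<mu> \<in> borel_prob_measures"
  shows "finite_mixture (\<lambda>_. 1 / Suc N) (\<lambda>k. distr \<mu> borel (U ^^ k)) (Suc N)"
  using distr_borel_prob[OF assms(2) measurable_funpow[OF assms(1)]] by unfold_locales auto

lemma orbit_average_borel_prob:
  fixes U :: "'a::topological_space \<Rightarrow> 'a"
  assumes "U \<in> borel_measurable borel" "\<mu> \<in> borel_prob_measures"
  shows "orbit_average U \<mu> N \<in> borel_prob_measures"
  unfolding orbit_average_def by (rule finite_mixture.mixture_borel_prob[OF finite_mixture_orbit_average[OF assms]]) simp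

lemma integral_orbit_average:
  fixes g :: "'a::topological_space \<Rightarrow> real"
  assumes U: "U \<in> borel_measurable borel" and \<mu>: "\<mu> \<in> borel_prob_measures"
    and g: "g \<in> borel_measurable borel" and B: "\<And>x. \<bar>g x\<bar> \<le> B"
  shows "integral\<^sup>L (orbit_average U \<mu> N) g = (\<Sum>k<Suc N. \<integral>x. g ((U ^^ k) x) \<partial>\<mu>) / Suc N"
  unfolding orbit_average_def finite_mixture.integral_mixture[OF finite_mixture_orbit_average[OF U \<mu>] g B]
  by (simp add: sum_divide_distrib integral_distr_borel_prob[OF \<mu> measurable_funpow[OF U] g]
      del: sum.lessThan_Suc)

lemma orbit_average_asymptotically_invariant:
  fixes g :: "'a::topological_space \<Rightarrow> real"
  assumes U: "U \<in> borel_measurable borel" and \<mu>: "\<mu> \<in> borel_prob_measures"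
    and g: "g \<in> borel_measurable borel" and B: "\<And>x. \<bar>g x\<bar> \<le> B"
  shows "(\<lambda>N. (\<integral>x. g (U x) \<partial>orbit_average U \<mu> N) - integral\<^sup>L (orbit_average U \<mu> N) g) \<longlonglongrightarrow> 0"
proof -
  define a where "a k = (\<integral>x. g ((U ^^ k) x) \<partial>\<mu>)" for k
  have a_bound: "\<bar>a k\<bar> \<le> B" for k
  proof -
    interpret prob_space \<mu> by (rule prob_space_borel_prob[OF \<mu>])
    have "integrable \<mu> (\<lambda>x. g ((U ^^ k) x))"
      using B by (intro integrable_borel_prob_bounded[OF \<mu>] measurable_compose[OF measurable_funpow[OF U] g])
    moreover have "\<And>x. - B \<le> g ((U ^^ k) x) \<and> g ((U ^^ k) x) \<le> B"
      using B by (meson abs_le_iff minus_le_iff)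
    ultimately have "- B \<le> a k \<and> a k \<le> B"
      unfolding a_def by (auto intro: integral_le_const integral_ge_const)
    then show ?thesis by linarith
  qed
  have gU: "(\<lambda>x. g (U x)) \<in> borel_measurable borel" by (rule measurable_compose[OF U g])
  have "(\<integral>x. g (U x) \<partial>orbit_average U \<mu> N) - integral\<^sup>L (orbit_average U \<mu> N) g =
      (\<Sum>k<Suc N. a (Suc k) - a k) / Suc N" for N
    unfolding integral_orbit_average[OF U \<mu> g B] integral_orbit_average[OF U \<mu> gU B] a_def
    by (simp add: diff_divide_distrib sum_subtractf del: sum.lessThan_Suc)
  then have "(\<integral>x. g (U x) \<partial>orbit_average U \<mu> N) - integral\<^sup>L (orbit_average U \<mu> N) g =
      (a (Suc N) - a 0) / Suc N" for N
    by (simp only: sum_lessThan_telescope)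
  moreover have "(\<lambda>N. (a (Suc N) - a 0) / Suc N) \<longlonglongrightarrow> 0"
  proof (rule Lim_null_comparison)
    show "\<forall>\<^sub>F N in sequentially. norm ((a (Suc N) - a 0) / Suc N) \<le> 2 * B / Suc N"
    proof (intro always_eventually allI)
      fix N
      have "\<bar>a (Suc N) - a 0\<bar> \<le> 2 * B" using a_bound[of "Suc N"] a_bound[of 0] by linarith
      then show "norm ((a (Suc N) - a 0) / Suc N) \<le> 2 * B / Suc N"
        by (simp add: divide_right_mono)
    qed
    show "(\<lambda>N. 2 * B / real (Suc N)) \<longlonglongrightarrow> 0"
      using LIMSEQ_Suc[OF lim_const_over_n[of "2 * B"]] by simp
  qed
  ultimately show ?thesis by simp
qed

lemma integral_orbit_average_section:
  fixes U :: "'z::topological_space \<Rightarrow> 'z" and S :: "'y::topological_space \<Rightarrow> 'y" and h :: "'y \<Rightarrow> real"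
  assumes U: "U \<in> borel_measurable borel" and S: "S \<in> borel_measurable borel"
    and p[measurable]: "p \<in> borel_measurable borel" and semiconj: "S \<circ> p = p \<circ> U"
    and \<nu>: "\<nu> \<in> invariant_measures S"
    and s[measurable]: "s \<in> borel_measurable borel" and ps: "\<And>y. p (s y) = y"
    and h[measurable]: "h \<in> borel_measurable borel" and B: "\<And>z. \<bar>h (p z)\<bar> \<le> B"
  shows "(\<integral>z. h (p z) \<partial>orbit_average U (distr \<nu> borel s) N) = integral\<^sup>L \<nu> h"
proof -
  have \<nu>_prob: "\<nu> \<in> borel_prob_measures" by (rule invariant_measuresD(1)[OF \<nu>])
  have "(\<integral>z. h (p ((U ^^ k) z)) \<partial>distr \<nu> borel s) = integral\<^sup>L \<nu> h" for k
  proof -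
    have [measurable]: "S ^^ k \<in> borel_measurable borel" by (rule measurable_funpow[OF S])
    have "(\<integral>z. h (p ((U ^^ k) z)) \<partial>distr \<nu> borel s) = (\<integral>y. h ((S ^^ k) (p (s y))) \<partial>\<nu>)"
      unfolding funpow_semiconj[OF semiconj] by (rule integral_distr_borel_prob[OF \<nu>_prob s]) simp
    also have "\<dots> = integral\<^sup>L (distr \<nu> borel (S ^^ k)) h"
      using ps by (simp add: integral_distr_borel_prob[OF \<nu>_prob])
    finally show ?thesis by (simp add: distr_funpow_invariant[OF \<nu> S])
  qed
  then show ?thesis
    using integral_orbit_average[OF U distr_borel_prob[OF \<nu>_prob s] measurable_compose[OF p h] B]
    by simp
qed

text \<open>Krylov--Bogolyubov: push \<nu> to Z along a Borel section of p and take a weak* limit point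
  of the orbit averages; it is U-invariant, and it still projects to \<nu> because p intertwines
  U with the S-invariant \<nu>.\<close>
theorem invariant_lift_exists:
  fixes U :: "'z::metric_space \<Rightarrow> 'z" and S :: "'y::metric_space \<Rightarrow> 'y" and p :: "'z \<Rightarrow> 'y"
  assumes cpt: "compact (UNIV :: 'z set)" and U: "continuous_on UNIV U"
    and S: "S \<in> borel_measurable borel" and p: "continuous_on UNIV p" "surj p"
    and semiconj: "S \<circ> p = p \<circ> U" and \<nu>: "\<nu> \<in> invariant_measures S"
  obtains m where "m \<in> invariant_measures U" "distr m borel p = \<nu>"
proof -
  have U_borel: "U \<in> borel_measurable borel" by (rule borel_measurable_continuous_onI[OF U])
  have p_borel: "p \<in> borel_measurable borel" by (rule borel_measurable_continuous_onI[OF p(1)])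
  have \<nu>_prob: "\<nu> \<in> borel_prob_measures" by (rule invariant_measuresD(1)[OF \<nu>])
  obtain s where s: "s \<in> borel_measurable borel" and ps: "\<And>y. p (s y) = y"
    using continuous_surj_borel_section[OF cpt p] by blast
  define A where "A = orbit_average U (distr \<nu> borel s)"
  have "A N \<in> borel_prob_measures" for N
    unfolding A_def by (rule orbit_average_borel_prob[OF U_borel distr_borel_prob[OF \<nu>_prob s]])
  then obtain r m where r: "strict_mono r" and m: "m \<in> borel_prob_measures"
    and conv: "weak_star_conv (A \<circ> r) m"
    using borel_prob_measures_seq_compact[OF cpt] by blast
  have "m \<in> invariant_measures U"
  proof (rule invariant_of_weak_star_limit[OF U m conv])
    fix g :: "'z \<Rightarrow> real" assume g: "continuous_on UNIV g"
    obtain B where B: "\<And>x. \<bar>g x\<bar> \<le> B" using continuous_on_compact_UNIV_bounded[OF cpt g] by blast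
    show "(\<lambda>n. (\<integral>x. g (U x) \<partial>(A \<circ> r) n) - integral\<^sup>L ((A \<circ> r) n) g) \<longlonglongrightarrow> 0"
      using LIMSEQ_subseq_LIMSEQ[OF orbit_average_asymptotically_invariant[OF U_borel
          distr_borel_prob[OF \<nu>_prob s] borel_measurable_continuous_onI[OF g] B] r]
      by (simp add: A_def comp_def)
  qed
  moreover have "distr m borel p = \<nu>"
  proof (rule borel_prob_eqI_continuous[OF distr_borel_prob[OF m p_borel] \<nu>_prob])
    fix h :: "'y \<Rightarrow> real" assume h: "continuous_on UNIV h"
    have h_borel: "h \<in> borel_measurable borel" by (rule borel_measurable_continuous_onI[OF h])
    have hp: "continuous_on UNIV (\<lambda>z. h (p z))" by (rule continuous_on_compose2[OF h p(1)]) auto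
    obtain B where B: "\<And>z. \<bar>h (p z)\<bar> \<le> B" using continuous_on_compact_UNIV_bounded[OF cpt hp] by blast
    have "(\<lambda>n. \<integral>z. h (p z) \<partial>(A \<circ> r) n) = (\<lambda>_. integral\<^sup>L \<nu> h)"
      using integral_orbit_average_section[OF U_borel S p_borel semiconj \<nu> s ps h_borel B]
      by (simp add: A_def)
    then have "(\<integral>z. h (p z) \<partial>m) = integral\<^sup>L \<nu> h"
      using weak_star_convD[OF conv hp] by (simp add: LIMSEQ_const_iff)
    then show "integral\<^sup>L (distr m borel p) h = integral\<^sup>L \<nu> h"
      by (simp add: integral_distr_borel_prob[OF m p_borel h_borel])
  qed
  ultimately show ?thesis using that by blast
qed

section \<open>Convexity and lower semicontinuity of psi\<close>

definition invariant_lifts ::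
  "('z::topological_space \<Rightarrow> 'z) \<Rightarrow> ('z \<Rightarrow> 'y::topological_space) \<Rightarrow> 'y measure \<Rightarrow> 'z measure set" where
  "invariant_lifts U p \<nu> = {m \<in> invariant_measures U. distr m borel p = \<nu>}"

lemma psi_eq_Inf_invariant_lifts: "psi U p f \<nu> = Inf ((\<lambda>m. integral\<^sup>L m f) ` invariant_lifts U p \<nu>)"
  unfolding psi_def invariant_lifts_def by (rule arg_cong[where f=Inf]) auto

locale tds_factor =
  fixes U :: "'z::metric_space \<Rightarrow> 'z" and S :: "'y::metric_space \<Rightarrow> 'y" and p :: "'z \<Rightarrow> 'y"
  assumes tds_U: "tds U" and tds_S: "tds S" and factor: "factor_map U S p"
begin

lemma compact_Z: "compact (UNIV :: 'z set)" and continuous_U: "continuous_on UNIV U"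
  using tds_U unfolding tds_def homeomorphism_def by auto

lemma compact_Y: "compact (UNIV :: 'y set)" and continuous_S: "continuous_on UNIV S"
  using tds_S unfolding tds_def homeomorphism_def by auto

lemma continuous_p: "continuous_on UNIV p" and surj_p: "surj p" and semiconj: "S \<circ> p = p \<circ> U"
  using factor unfolding factor_map_def by auto

lemma invariant_lifts_nonempty:
  assumes "\<nu> \<in> invariant_measures S" shows "invariant_lifts U p \<nu> \<noteq> {}"
  using invariant_lift_exists[OF compact_Z continuous_U borel_measurable_continuous_onI[OF continuous_S]
      continuous_p surj_p semiconj assms]
  unfolding invariant_lifts_def by blast

lemma mix_measure_invariant_lifts:
  assumes m1: "m1 \<in> invariant_lifts U p \<nu>1" and m2: "m2 \<in> invariant_lifts U p \<nu>2" and t: "0 \<le> t" "t \<le> 1"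
  shows "mix_measure t m1 m2 \<in> invariant_lifts U p (mix_measure t \<nu>1 \<nu>2)"
proof -
  have m: "m1 \<in> borel_prob_measures" "m2 \<in> borel_prob_measures"
    using m1 m2 unfolding invariant_lifts_def invariant_measures_def by auto
  show ?thesis
    using m1 m2 mix_measure_borel_prob[OF m t]
      distr_mix_measure[OF m t borel_measurable_continuous_onI[OF continuous_U]]
      distr_mix_measure[OF m t borel_measurable_continuous_onI[OF continuous_p]]
    unfolding invariant_lifts_def invariant_measures_def by simp
qed

lemma invariant_lifts_weak_star_limit:
  assumes ms: "\<And>n. ms n \<in> invariant_lifts U p (\<nu>s n)" and m: "m \<in> borel_prob_measures"
    and conv: "weak_star_conv ms m"
  shows "m \<in> invariant_measures U" "weak_star_conv \<nu>s (distr m borel p)"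
proof -
  have inv: "ms n \<in> invariant_measures U" and proj: "distr (ms n) borel p = \<nu>s n" for n
    using ms unfolding invariant_lifts_def by auto
  show "m \<in> invariant_measures U" by (rule invariant_measures_weak_star_closed[OF continuous_U inv m conv])
  have "weak_star_conv (\<lambda>n. distr (ms n) borel p) (distr m borel p)"
    by (rule weak_star_conv_distr[OF continuous_p invariant_measuresD(1)[OF inv] m conv])
  then show "weak_star_conv \<nu>s (distr m borel p)" by (simp add: proj)
qed

context
  fixes f :: "'z \<Rightarrow> real"
  assumes f: "continuous_on UNIV f"
begin

lemma psi_le_integral:
  assumes "m \<in> invariant_lifts U p \<nu>" shows "psi U p f \<nu> \<le> integral\<^sup>L m f"
proof -
  obtain B where B: "\<And>z. \<bar>f z\<bar> \<le> B" using continuous_on_compact_UNIV_bounded[OF compact_Z f] by blast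
  then have f_ge: "- B \<le> f z" for z by (meson abs_le_iff minus_le_iff)
  have "- B \<le> integral\<^sup>L m f" if "m \<in> invariant_lifts U p \<nu>" for m
  proof -
    have m: "m \<in> borel_prob_measures" using that unfolding invariant_lifts_def invariant_measures_def by auto
    interpret prob_space m by (rule prob_space_borel_prob[OF m])
    show ?thesis
      using integrable_borel_prob_bounded[OF m borel_measurable_continuous_onI[OF f] B] f_ge
      by (intro integral_ge_const AE_I2) auto
  qed
  then show ?thesis
    unfolding psi_eq_Inf_invariant_lifts using assms by (intro cInf_lower bdd_belowI[of _ "- B"]) auto
qed

lemma invariant_lift_integral_less:
  assumes "\<nu> \<in> invariant_measures S" "0 < e"
  obtains m where "m \<in> invariant_lifts U p \<nu>" "integral\<^sup>L m f < psi U p f \<nu> + e"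
  using cInf_lessD[of "(\<lambda>m. integral\<^sup>L m f) ` invariant_lifts U p \<nu>" "psi U p f \<nu> + e"]
    invariant_lifts_nonempty[OF assms(1)] assms(2)
  unfolding psi_eq_Inf_invariant_lifts by auto

lemma psi_convex:
  assumes \<nu>1: "\<nu>1 \<in> invariant_measures S" and \<nu>2: "\<nu>2 \<in> invariant_measures S" and t: "0 \<le> t" "t \<le> 1"
  shows "psi U p f (mix_measure t \<nu>1 \<nu>2) \<le> t * psi U p f \<nu>1 + (1 - t) * psi U p f \<nu>2"
proof (rule field_le_epsilon)
  fix e :: real assume "0 < e"
  obtain m1 where m1: "m1 \<in> invariant_lifts U p \<nu>1" "integral\<^sup>L m1 f < psi U p f \<nu>1 + e"
    using invariant_lift_integral_less[OF \<nu>1 \<open>0 < e\<close>] by blast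
  obtain m2 where m2: "m2 \<in> invariant_lifts U p \<nu>2" "integral\<^sup>L m2 f < psi U p f \<nu>2 + e"
    using invariant_lift_integral_less[OF \<nu>2 \<open>0 < e\<close>] by blast
  have m: "m1 \<in> borel_prob_measures" "m2 \<in> borel_prob_measures"
    using m1 m2 unfolding invariant_lifts_def invariant_measures_def by auto
  obtain B where B: "\<And>z. \<bar>f z\<bar> \<le> B" using continuous_on_compact_UNIV_bounded[OF compact_Z f] by blast
  have "psi U p f (mix_measure t \<nu>1 \<nu>2) \<le> integral\<^sup>L (mix_measure t m1 m2) f"
    by (rule psi_le_integral[OF mix_measure_invariant_lifts[OF m1(1) m2(1) t]])
  also have "\<dots> = t * integral\<^sup>L m1 f + (1 - t) * integral\<^sup>L m2 f"
    by (rule integral_mix_measure[OF m t borel_measurable_continuous_onI[OF f] B])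
  also have "\<dots> \<le> t * (psi U p f \<nu>1 + e) + (1 - t) * (psi U p f \<nu>2 + e)"
    using m1(2) m2(2) t by (intro add_mono mult_left_mono) auto
  finally show "psi U p f (mix_measure t \<nu>1 \<nu>2) \<le> t * psi U p f \<nu>1 + (1 - t) * psi U p f \<nu>2 + e"
    by (simp add: algebra_simps)
qed

lemma psi_le_of_shrinking_nhds:
  assumes W_mono: "\<And>m n. m \<le> n \<Longrightarrow> W n \<subseteq> W m"
    and W_limit: "\<And>\<mu>s \<mu>. (\<And>n. \<mu>s n \<in> W n) \<Longrightarrow> \<mu> \<in> borel_prob_measures \<Longrightarrow>
      weak_star_conv \<mu>s \<mu> \<Longrightarrow> \<mu> = \<nu>"
    and \<nu>s: "\<And>n. \<nu>s n \<in> W n" "\<And>n. \<nu>s n \<in> invariant_measures S" "\<And>n. psi U p f (\<nu>s n) \<le> a"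
  shows "psi U p f \<nu> \<le> a"
proof -
  have "\<exists>m. m \<in> invariant_lifts U p (\<nu>s n) \<and> integral\<^sup>L m f < psi U p f (\<nu>s n) + 1 / Suc n" for n
  proof -
    have "0 < 1 / real (Suc n)" by simp
    from invariant_lift_integral_less[OF \<nu>s(2) this] show ?thesis by blast
  qed
  then have "\<forall>n. \<exists>m. m \<in> invariant_lifts U p (\<nu>s n) \<and> integral\<^sup>L m f < psi U p f (\<nu>s n) + 1 / Suc n"
    by blast
  from choice[OF this] obtain ms where ms: "\<And>n. ms n \<in> invariant_lifts U p (\<nu>s n)"
    "\<And>n. integral\<^sup>L (ms n) f < psi U p f (\<nu>s n) + 1 / Suc n"
    by blast
  have "ms n \<in> borel_prob_measures" for n
    using ms(1) unfolding invariant_lifts_def invariant_measures_def by auto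
  then obtain r m where r: "strict_mono r" and m: "m \<in> borel_prob_measures"
    and conv: "weak_star_conv (ms \<circ> r) m"
    using borel_prob_measures_seq_compact[OF compact_Z] by blast
  have lift: "m \<in> invariant_measures U" "weak_star_conv (\<nu>s \<circ> r) (distr m borel p)"
    using invariant_lifts_weak_star_limit[of "ms \<circ> r" "\<nu>s \<circ> r"] ms(1) m conv by auto
  have "(\<nu>s \<circ> r) n \<in> W n" for n using \<nu>s(1)[of "r n"] W_mono[OF seq_suble[OF r]] by auto
  then have "distr m borel p = \<nu>"
    by (rule W_limit[OF _ distr_borel_prob[OF m borel_measurable_continuous_onI[OF continuous_p]] lift(2)])
  then have "psi U p f \<nu> \<le> integral\<^sup>L m f"
    using lift(1) by (intro psi_le_integral) (simp add: invariant_lifts_def)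
  also have "integral\<^sup>L m f \<le> a"
  proof (rule LIMSEQ_le[OF weak_star_convD[OF conv f]])
    show "(\<lambda>n. a + 1 / Suc n) \<longlonglongrightarrow> a"
      using tendsto_add[OF tendsto_const LIMSEQ_Suc[OF lim_const_over_n[of 1]], of a] by simp
    have "integral\<^sup>L ((ms \<circ> r) n) f \<le> a + 1 / Suc n" for n
    proof -
      have "1 / real (Suc (r n)) \<le> 1 / Suc n" using seq_suble[OF r, of n] by (simp add: frac_le)
      then show ?thesis using ms(2)[of "r n"] \<nu>s(3)[of "r n"] by simp
    qed
    then show "\<exists>N. \<forall>n\<ge>N. integral\<^sup>L ((ms \<circ> r) n) f \<le> a + 1 / Suc n" by blast
  qed
  finally show ?thesis .
qed

lemma psi_lower_semicontinuous:
  "lower_semicontinuous_on_top (subtopology weak_star_topology (invariant_measures S)) (psi U p f)"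
  unfolding lower_semicontinuous_on_top_def
proof
  fix a :: real
  let ?X = "subtopology weak_star_topology (invariant_measures S)"
  have topspace_X: "topspace ?X = invariant_measures S"
    by (auto simp: topspace_subtopology topspace_weak_star invariant_measures_def)
  have nbhd: "\<exists>W. openin weak_star_topology W \<and> \<nu> \<in> W \<and> W \<inter> invariant_measures S \<subseteq> {\<nu>'. a < psi U p f \<nu>'}"
    if \<nu>: "\<nu> \<in> invariant_measures S" and a: "a < psi U p f \<nu>" for \<nu>
  proof (rule weak_star_shrinking_nhds[OF compact_Y invariant_measuresD(1)[OF \<nu>]])
    fix W assume W_open: "\<And>n. openin weak_star_topology (W n)" and \<nu>_W: "\<And>n. \<nu> \<in> W n"
      and W_mono: "\<And>m n. m \<le> n \<Longrightarrow> W n \<subseteq> W m"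
      and W_limit: "\<And>\<mu>s \<mu>. (\<And>n. \<mu>s n \<in> W n) \<Longrightarrow> \<mu> \<in> borel_prob_measures \<Longrightarrow>
        weak_star_conv \<mu>s \<mu> \<Longrightarrow> \<mu> = \<nu>"
    show ?thesis
    proof (rule ccontr)
      assume no_nbhd: "\<not> ?thesis"
      have "\<forall>n. \<exists>\<nu>'. \<nu>' \<in> W n \<and> \<nu>' \<in> invariant_measures S \<and> psi U p f \<nu>' \<le> a"
      proof
        fix n
        obtain \<nu>' where "\<nu>' \<in> W n \<inter> invariant_measures S" "\<nu>' \<notin> {\<nu>'. a < psi U p f \<nu>'}"
          using no_nbhd W_open[of n] \<nu>_W[of n] by blast
        then show "\<exists>\<nu>'. \<nu>' \<in> W n \<and> \<nu>' \<in> invariant_measures S \<and> psi U p f \<nu>' \<le> a" by auto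
      qed
      from choice[OF this] obtain \<nu>s
        where "\<forall>n. \<nu>s n \<in> W n \<and> \<nu>s n \<in> invariant_measures S \<and> psi U p f (\<nu>s n) \<le> a"
        by blast
      then have "psi U p f \<nu> \<le> a" by (intro psi_le_of_shrinking_nhds[OF W_mono W_limit]) auto
      then show False using a by simp
    qed
  qed
  show "openin ?X {\<nu> \<in> topspace ?X. a < psi U p f \<nu>}"
  proof (subst openin_subopen, intro ballI)
    fix \<nu> assume "\<nu> \<in> {\<nu> \<in> topspace ?X. a < psi U p f \<nu>}"
    then have "\<nu> \<in> invariant_measures S" "a < psi U p f \<nu>" using topspace_X by auto
    then obtain W where W: "openin weak_star_topology W" "\<nu> \<in> W"
      "W \<inter> invariant_measures S \<subseteq> {\<nu>'. a < psi U p f \<nu>'}"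
      using nbhd by blast
    show "\<exists>T. openin ?X T \<and> \<nu> \<in> T \<and> T \<subseteq> {\<nu> \<in> topspace ?X. a < psi U p f \<nu>}"
      using W \<open>\<nu> \<in> {\<nu> \<in> topspace ?X. a < psi U p f \<nu>}\<close> topspace_X
      by (intro exI[of _ "W \<inter> invariant_measures S"]) (auto simp: openin_subtopology_Int)
  qed
qed
end

end

theorem lemma1p7:
  fixes U :: "'z::metric_space \<Rightarrow> 'z" and S :: "'y::metric_space \<Rightarrow> 'y"
    and p :: "'z \<Rightarrow> 'y" and f :: "'z \<Rightarrow> real"
  assumes "tds U" and "tds S" and "factor_map U S p"
    and "continuous_on UNIV f"
  shows "lower_semicontinuous_on_top
           (subtopology weak_star_topology (invariant_measures S)) (psi U p f) \<and>
         (\<forall>\<nu>1 \<in> invariant_measures S. \<forall>\<nu>2 \<in> invariant_measures S. \<forall>t::real.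
           0 \<le> t \<and> t \<le> 1 \<longrightarrow>
           psi U p f (mix_measure t \<nu>1 \<nu>2) \<le> t * psi U p f \<nu>1 + (1 - t) * psi U p f \<nu>2)"
proof -
  interpret tds_factor U S p by unfold_locales fact+
  show ?thesis using psi_lower_semicontinuous[OF assms(4)] psi_convex[OF assms(4)] by blast
qed

end
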